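(* Define, for $\boldsymbol{\alpha}\in\mathbb{R}^T_{++}$, $$Z_C(\boldsymbol{\alpha})=\Big\{\boldsymbol{x}\in\mathbb{R}^n:\sup_{\mathbb{P}\in\mathcal{P}_W}\inf_{\beta\in\mathbb{R}}\Big\{\beta+\frac1\epsilon\mathbb{E}_{\mathbb{P}}\Big[\Big(\max_{t\in[T]}\{-\alpha_t f_t(\boldsymbol{x},\boldsymbol{\xi})\}-\beta\Big)_+\Big]\Big\}\le0\Big\},$$ and $Z_C=\bigcup_{\boldsymbol{\alpha}\in\mathbb{R}^T_{++}}Z_C(\boldsymbol{\alpha})$. Then $Z_C=Z_{C_1}\cup Z_{C_2}$, where $Z_{C_1}=\{\boldsymbol{x}\in\mathbb{R}^n: f_t(\boldsymbol{x},\boldsymbol{\xi})\ge0\ \forall\boldsymbol{\xi}\in\Xi,\ \forall t\in[T]\}$ and $Z_{C_2}$ is the set of all $\boldsymbol{x}\in\mathbb{R}^n$ for which there exist $\lambda\ge0$, $\alpha_t\ge0$ ($t\in[T]$), $s_i\ge0$ ($i\in[N]$) and $\boldsymbol{z}_{it}\in\mathbb{R}^m$ such that $$\lambda\delta+\frac1N\sum_{i=1}^Ns_i\le\epsilon,$$ $$G_{f_t}(\boldsymbol{z}_{it},\alpha_t,\boldsymbol{x})+1-\boldsymbol{z}_{it}^{\top}\boldsymbol{\zeta}^i-s_i\le0\quad\forall i\in[N],\forall t\in[T],$$ $$\|\boldsymbol{z}_{it}\|_*-\lambda\le0\quad\forall i\in[N],\forall t\in[T],$$ with $G_{f_t}(\boldsymbol{z},\alpha,\boldsymbol{x})=\sup_{\boldsymbol{\xi}\in\Xi}[\boldsymbol{z}^{\top}\boldsymbol{\xi}-\alpha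 f_t(\boldsymbol{x},\boldsymbol{\xi})]$.
   Context: Setting: $\boldsymbol{x}\in\mathbb{R}^n$, $\boldsymbol{\xi}\in\mathbb{R}^m$ supported on $\Xi\subseteq\mathbb{R}^m$, $[T]=\{1,\dots,T\}$, $\epsilon\in(0,1)$, $(a)_+=\max\{a,0\}$, $\mathbb{R}^T_{++}$ the vectors with all entries positive. Assumptions: (A1) each $f_t$ is convex continuous in $\boldsymbol{\xi}$ for fixed $\boldsymbol{x}$ and concave continuous in $\boldsymbol{x}$ for fixed $\boldsymbol{\xi}$; (A2) $\Xi$ is nonempty, closed and convex. $\|\cdot\|$ is a norm on $\mathbb{R}^m$ with dual norm $\|\cdot\|_*$. Given samples $\boldsymbol{\zeta}^1,\dots,\boldsymbol{\zeta}^N\in\Xi$ with empirical distribution $\mathbb{P}_{\tilde\zeta}$ and radius $\delta>0$, $\mathcal{P}_W=\{\mathbb{P}:\mathbb{P}\{\boldsymbol{\xi}\in\Xi\}=1,\ W(\mathbb{P},\mathbb{P}_{\tilde\zeta})\le\delta\}$ where $W$ is the 1-Wasserstein distance with transport cost $\|\boldsymbol{\xi}_1-\boldsymbol{\xi}_2\|$. *)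

theory Defs
  imports "HOL-Probability.Probability"
begin

definition is_norm :: "(real ^ 'm \<Rightarrow> real) \<Rightarrow> bool" where
  "is_norm nrm \<longleftrightarrow> (\<forall>x. 0 \<le> nrm x) \<and> (\<forall>x. nrm x = 0 \<longleftrightarrow> x = 0)
     \<and> (\<forall>c x. nrm (c *\<^sub>R x) = \<bar>c\<bar> * nrm x) \<and> (\<forall>x y. nrm (x + y) \<le> nrm x + nrm y)"

definition dual_norm :: "(real ^ 'm \<Rightarrow> real) \<Rightarrow> real ^ 'm \<Rightarrow> real" where
  "dual_norm nrm z = (SUP \<xi>\<in>{\<xi>. nrm \<xi> \<le> 1}. z \<bullet> \<xi>)"

definition couplings :: "(real ^ 'm) measure \<Rightarrow> (real ^ 'm) measure \<Rightarrow> ((real ^ 'm) \<times> (real ^ 'm)) measure set" where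
  "couplings P Q = {\<pi>. prob_space \<pi> \<and> sets \<pi> = sets (borel \<Otimes>\<^sub>M borel)
      \<and> distr \<pi> borel fst = P \<and> distr \<pi> borel snd = Q}"

definition wasserstein1 :: "(real ^ 'm \<Rightarrow> real) \<Rightarrow> (real ^ 'm) measure \<Rightarrow> (real ^ 'm) measure \<Rightarrow> ennreal" where
  "wasserstein1 nrm P Q = (INF \<pi>\<in>couplings P Q. \<integral>\<^sup>+ p. ennreal (nrm (fst p - snd p)) \<partial>\<pi>)"

definition emp_dist :: "nat \<Rightarrow> (nat \<Rightarrow> real ^ 'm) \<Rightarrow> (real ^ 'm) measure" where
  "emp_dist N \<zeta> = distr (measure_pmf (pmf_of_set {1..N})) borel \<zeta>"

definition ambiguity_set :: "(real ^ 'm \<Rightarrow> real) \<Rightarrow> (real ^ 'm) set \<Rightarrow> nat \<Rightarrow> (nat \<Rightarrow> real ^ 'm) \<Rightarrow> real \<Rightarrow> (real ^ 'm) measure set" where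
  "ambiguity_set nrm \<Xi> N \<zeta> \<delta> = {P. prob_space P \<and> sets P = sets borel \<and> emeasure P \<Xi> = 1
      \<and> wasserstein1 nrm P (emp_dist N \<zeta>) \<le> ennreal \<delta>}"

definition ZC_alpha :: "(nat \<Rightarrow> real ^ 'n \<Rightarrow> real ^ 'm \<Rightarrow> real) \<Rightarrow> nat \<Rightarrow> real \<Rightarrow> (real ^ 'm) measure set
     \<Rightarrow> (nat \<Rightarrow> real) \<Rightarrow> (real ^ 'n) set" where
  "ZC_alpha f T \<epsilon> PW \<alpha> = {x. (SUP P\<in>PW. INF \<beta>::real. ereal \<beta> + ereal (1 / \<epsilon>) *
        enn2ereal (\<integral>\<^sup>+ \<xi>. ennreal (max (Max ((\<lambda>t. - \<alpha> t * f t x \<xi>) ` {1..T}) - \<beta>) 0) \<partial>P)) \<le> 0}"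

definition ZC :: "(nat \<Rightarrow> real ^ 'n \<Rightarrow> real ^ 'm \<Rightarrow> real) \<Rightarrow> nat \<Rightarrow> real \<Rightarrow> (real ^ 'm) measure set \<Rightarrow> (real ^ 'n) set" where
  "ZC f T \<epsilon> PW = (\<Union>\<alpha>\<in>{\<alpha>. \<forall>t\<in>{1..T}. \<alpha> t > 0}. ZC_alpha f T \<epsilon> PW \<alpha>)"

definition ZC1 :: "(nat \<Rightarrow> real ^ 'n \<Rightarrow> real ^ 'm \<Rightarrow> real) \<Rightarrow> nat \<Rightarrow> (real ^ 'm) set \<Rightarrow> (real ^ 'n) set" where
  "ZC1 f T \<Xi> = {x. \<forall>\<xi>\<in>\<Xi>. \<forall>t\<in>{1..T}. f t x \<xi> \<ge> 0}"

definition G_fun :: "(nat \<Rightarrow> real ^ 'n \<Rightarrow> real ^ 'm \<Rightarrow> real) \<Rightarrow> (real ^ 'm) set \<Rightarrow> nat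
     \<Rightarrow> real ^ 'm \<Rightarrow> real \<Rightarrow> real ^ 'n \<Rightarrow> ereal" where
  "G_fun f \<Xi> t z a x = (SUP \<xi>\<in>\<Xi>. ereal (z \<bullet> \<xi> - a * f t x \<xi>))"

definition ZC2 :: "(nat \<Rightarrow> real ^ 'n \<Rightarrow> real ^ 'm \<Rightarrow> real) \<Rightarrow> nat \<Rightarrow> (real ^ 'm) set \<Rightarrow> (real ^ 'm \<Rightarrow> real)
     \<Rightarrow> nat \<Rightarrow> (nat \<Rightarrow> real ^ 'm) \<Rightarrow> real \<Rightarrow> real \<Rightarrow> (real ^ 'n) set" where
  "ZC2 f T \<Xi> nrm N \<zeta> \<delta> \<epsilon> = {x. \<exists>(lam::real) (\<alpha>::nat \<Rightarrow> real) (s::nat \<Rightarrow> real) (z::nat \<Rightarrow> nat \<Rightarrow> real ^ 'm).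
      lam \<ge> 0 \<and> (\<forall>t\<in>{1..T}. \<alpha> t \<ge> 0) \<and> (\<forall>i\<in>{1..N}. s i \<ge> 0)
      \<and> lam * \<delta> + (1 / real N) * (\<Sum>i=1..N. s i) \<le> \<epsilon>
      \<and> (\<forall>i\<in>{1..N}. \<forall>t\<in>{1..T}. G_fun f \<Xi> t (z i t) (\<alpha> t) x + ereal (1 - z i t \<bullet> \<zeta> i - s i) \<le> 0)
      \<and> (\<forall>i\<in>{1..N}. \<forall>t\<in>{1..T}. dual_norm nrm (z i t) - lam \<le> 0)}"

end

theory Submission
  imports Defs
begin

text \<open>Fix \<open>x\<close> and \<open>\<alpha>\<close> and let \<open>L\<close> be the worst scaled loss \<open>max\<^sub>t (- \<alpha> t * f t x \<xi>)\<close>;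
  \<open>x \<in> Z\<^sub>C(\<alpha>)\<close> says that the Rockafellar--Uryasev objective of \<open>L\<close> has infimum \<open>\<le> 0\<close> over
  \<open>\<beta>\<close> under every distribution of the Wasserstein ball.

  Points of \<open>Z\<^sub>C\<^sub>1\<close> satisfy this with \<open>\<beta> = 0\<close>. For a point of \<open>Z\<^sub>C\<^sub>2\<close>, whose \<open>\<alpha> t\<close> are
  automatically positive because \<open>\<epsilon> < 1\<close>, the constraints give
  \<open>L \<xi> + 1 \<le> s i + \<lambda> * nrm (\<xi> - \<zeta> i)\<close> on \<open>\<Xi>\<close>; integrating along a nearly optimal coupling
  bounds \<open>E\<^sub>P (L + 1)\<^sub>+\<close> by \<open>\<lambda> \<delta> + (1/N) \<Sum> s i \<le> \<epsilon>\<close>, so \<open>\<beta> = -1\<close> works.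

  Conversely, let \<open>x \<in> Z\<^sub>C(\<alpha>)\<close> with \<open>L \<xi>\<^sub>0 > 0\<close> for some \<open>\<xi>\<^sub>0 \<in> \<Xi>\<close>. Every finite transport
  plan of the samples induces a distribution in the ball, so no plan with tail mass \<open>\<epsilon>\<close> and
  cost below \<open>\<delta>\<close> has positive tail loss. Separating the convex set of (mass, loss, cost)
  triples of plans from \<open>{\<epsilon>} \<times> (0, \<infinity>) \<times> (-\<infinity>, \<delta>)\<close> yields multipliers \<open>p > 0\<close> and
  \<open>\<lambda> \<ge> 0\<close>. After dividing \<open>\<alpha>\<close> and \<open>\<lambda>\<close> by \<open>p\<close>, the suprema \<open>s i\<close> of the hinge functions
  \<open>(L \<xi> / p + 1)\<^sub>+ - (\<lambda> / p) * nrm (\<xi> - \<zeta> i)\<close> meet the budget, and a linear functional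
  squeezed between the concave function \<open>- (\<alpha> t / p) * f t x \<xi> + 1 - s i\<close> and the cone
  \<open>(\<lambda> / p) * nrm (\<xi> - \<zeta> i)\<close> provides \<open>- z i t\<close>.\<close>

section \<open>Norms and dual norms\<close>

lemma is_norm_nonneg: "is_norm nrm \<Longrightarrow> 0 \<le> nrm v"
  and is_norm_eq_0_iff: "is_norm nrm \<Longrightarrow> nrm v = 0 \<longleftrightarrow> v = 0"
  and is_norm_scaleR: "is_norm nrm \<Longrightarrow> nrm (c *\<^sub>R v) = \<bar>c\<bar> * nrm v"
  and is_norm_triangle: "is_norm nrm \<Longrightarrow> nrm (u + v) \<le> nrm u + nrm v"
  by (simp_all add: is_norm_def)

lemma is_norm_zero: "is_norm nrm \<Longrightarrow> nrm 0 = 0"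
  by (simp add: is_norm_eq_0_iff)

lemma is_norm_uminus: "is_norm nrm \<Longrightarrow> nrm (- v) = nrm v"
  using is_norm_scaleR[of nrm "-1" v] by simp

lemma is_norm_minus_commute: "is_norm nrm \<Longrightarrow> nrm (u - v) = nrm (v - u)"
  using is_norm_uminus[of nrm "u - v"] by simp

lemma convex_on_is_norm: "is_norm nrm \<Longrightarrow> convex_on UNIV nrm"
  by (rule convex_onI) (auto intro: order_trans[OF is_norm_triangle] simp: is_norm_scaleR)

lemma continuous_on_is_norm: "is_norm nrm \<Longrightarrow> continuous_on UNIV nrm"
  by (rule convex_on_continuous[OF open_UNIV convex_on_is_norm])

lemma borel_measurable_is_norm: "is_norm nrm \<Longrightarrow> nrm \<in> borel_measurable borel"
  by (rule borel_measurable_continuous_onI[OF continuous_on_is_norm])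

lemma is_norm_bounded_below:
  fixes nrm :: "real ^ 'm \<Rightarrow> real"
  assumes "is_norm nrm"
  obtains \<mu> where "\<mu> > 0" "\<And>v. \<mu> * norm v \<le> nrm v"
proof -
  have "sphere (0 :: real ^ 'm) 1 \<noteq> {}" by simp
  then obtain u where u: "u \<in> sphere 0 1" and min: "\<forall>v\<in>sphere 0 1. nrm u \<le> nrm v"
    using continuous_attains_inf[OF compact_sphere _
        continuous_on_subset[OF continuous_on_is_norm[OF assms]]]
    by blast
  have pos: "nrm u > 0"
    using u assms by (auto simp: less_le is_norm_nonneg is_norm_eq_0_iff)
  have "nrm u * norm v \<le> nrm v" for v
  proof (cases "v = 0")
    case False
    then have "nrm u \<le> nrm ((1 / norm v) *\<^sub>R v)" using min by simp
    with False show ?thesis using assms by (simp add: is_norm_scaleR field_simps)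
  qed (simp add: assms is_norm_zero)
  with pos show ?thesis by (rule that)
qed

lemma inner_le_dual_norm:
  assumes "is_norm nrm"
  shows "z \<bullet> v \<le> dual_norm nrm z * nrm v"
proof (cases "v = 0")
  case False
  obtain \<mu> where \<mu>: "\<mu> > 0" "\<And>v. \<mu> * norm v \<le> nrm v"
    using is_norm_bounded_below[OF assms] by blast
  have "z \<bullet> \<xi> \<le> norm z / \<mu>" if "nrm \<xi> \<le> 1" for \<xi>
  proof -
    have "norm \<xi> \<le> 1 / \<mu>" using \<mu> that order_trans[OF \<mu>(2) that] by (simp add: field_simps)
    then have "norm z * norm \<xi> \<le> norm z / \<mu>"
      by (metis mult_left_mono norm_ge_zero times_divide_eq_right mult.right_neutral)
    then show ?thesis using Cauchy_Schwarz_ineq2[of z \<xi>] by linarith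
  qed
  then have bdd: "bdd_above ((\<lambda>\<xi>. z \<bullet> \<xi>) ` {\<xi>. nrm \<xi> \<le> 1})"
    by (rule bdd_aboveI2[where M = "norm z / \<mu>"]) simp
  have pos: "nrm v > 0" using False assms by (simp add: less_le is_norm_nonneg is_norm_eq_0_iff)
  have "z \<bullet> ((1 / nrm v) *\<^sub>R v) \<le> dual_norm nrm z"
    unfolding dual_norm_def using pos assms by (intro cSUP_upper[OF _ bdd]) (simp add: is_norm_scaleR)
  with pos show ?thesis by (simp add: field_simps)
qed (simp add: assms is_norm_zero)

lemma dual_norm_le_iff:
  assumes "is_norm nrm" "0 \<le> lam"
  shows "dual_norm nrm w \<le> lam \<longleftrightarrow> (\<forall>v. w \<bullet> v \<le> lam * nrm v)"
proof
  assume "dual_norm nrm w \<le> lam"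
  then show "\<forall>v. w \<bullet> v \<le> lam * nrm v"
    using inner_le_dual_norm[OF assms(1)] is_norm_nonneg[OF assms(1)]
    by (meson mult_right_mono order_trans)
next
  assume "\<forall>v. w \<bullet> v \<le> lam * nrm v"
  then show "dual_norm nrm w \<le> lam"
    unfolding dual_norm_def using assms
    by (intro cSUP_least) (auto intro: order_trans mult_left_le simp: is_norm_zero exI[of _ 0])
qed

lemma dual_norm_uminus:
  assumes "is_norm nrm"
  shows "dual_norm nrm (- z) = dual_norm nrm z"
proof -
  have ball: "uminus ` {\<xi>. nrm \<xi> \<le> 1} = {\<xi>. nrm \<xi> \<le> 1}"
    using assms by (force simp: is_norm_uminus intro: image_eqI[of _ uminus "- _"])
  have "dual_norm nrm (- z) = (SUP \<xi>\<in>uminus ` {\<xi>. nrm \<xi> \<le> 1}. z \<bullet> \<xi>)"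
    unfolding dual_norm_def by (simp add: image_comp o_def)
  then show ?thesis
    unfolding ball dual_norm_def .
qed

section \<open>Separation lemmas\<close>

lemma affine_bounded_below_on_pos_reals:
  fixes a b \<gamma> :: real
  assumes bound: "\<And>t. 0 < t \<Longrightarrow> \<gamma> \<le> a + b * t"
  shows "0 \<le> b" and "\<gamma> \<le> a"
proof -
  show "0 \<le> b"
  proof (rule ccontr)
    assume "\<not> 0 \<le> b"
    define t where "t = (\<bar>a\<bar> + \<bar>\<gamma>\<bar> + 1) / - b"
    have "0 < t" "b * t = - (\<bar>a\<bar> + \<bar>\<gamma>\<bar> + 1)"
      using \<open>\<not> 0 \<le> b\<close> by (simp_all add: t_def divide_pos_neg)
    then show False using bound[of t] by linarith
  qed
  show "\<gamma> \<le> a"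
  proof (rule ccontr)
    assume "\<not> \<gamma> \<le> a"
    define t where "t = (\<gamma> - a) / (2 * (\<bar>b\<bar> + 1))"
    have "0 < t" using \<open>\<not> \<gamma> \<le> a\<close> by (simp add: t_def)
    moreover have "b * t < \<gamma> - a"
    proof -
      have "b * t \<le> (\<bar>b\<bar> + 1) * t" using \<open>0 < t\<close> by (intro mult_right_mono) auto
      also have "\<dots> = (\<gamma> - a) / 2"
        by (simp add: t_def add_pos_nonneg[of 1 "\<bar>b\<bar>"] field_simps)
      finally show ?thesis using \<open>\<not> \<gamma> \<le> a\<close> by simp
    qed
    ultimately show False using bound by force
  qed
qed

lemma linear_bounded_below_on_quadrant:
  fixes a B C \<gamma> \<delta> :: real
  assumes bound: "\<And>l c. 0 < l \<Longrightarrow> c < \<delta> \<Longrightarrow> \<gamma> \<le> a + B * l + C * c"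
  shows "0 \<le> B" and "C \<le> 0" and "\<gamma> \<le> a + C * \<delta>"
proof -
  have "\<gamma> \<le> (a + C * (\<delta> - 1)) + B * t" if "0 < t" for t
    using bound[of t "\<delta> - 1"] that by linarith
  then show "0 \<le> B" by (rule affine_bounded_below_on_pos_reals)
  have "\<gamma> \<le> (a + B + C * \<delta>) + (- C) * t" if "0 < t" for t
    using bound[of 1 "\<delta> - t"] that by (simp add: right_diff_distrib)
  from affine_bounded_below_on_pos_reals(1)[OF this] show "C \<le> 0" by simp
  have "\<gamma> \<le> (a + C * \<delta>) + (B - C) * t" if "0 < t" for t
    using bound[of t "\<delta> - t"] that by (simp add: algebra_simps)
  then show "\<gamma> \<le> a + C * \<delta>" by (rule affine_bounded_below_on_pos_reals)
qed

lemma convex_strict_epigraph: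
  assumes "convex_on UNIV g"
  shows "convex {p. g (fst p) < snd p}"
proof (rule convexI)
  fix p q :: "'a \<times> real" and u v :: real
  assume "p \<in> {p. g (fst p) < snd p}" "q \<in> {p. g (fst p) < snd p}" "0 \<le> u" "0 \<le> v" "u + v = 1"
  moreover have "g (u *\<^sub>R fst p + v *\<^sub>R fst q) \<le> u * g (fst p) + v * g (fst q)"
    using assms \<open>0 \<le> u\<close> \<open>0 \<le> v\<close> \<open>u + v = 1\<close> by (simp add: convex_on_def)
  ultimately show "u *\<^sub>R p + v *\<^sub>R q \<in> {p. g (fst p) < snd p}"
    by simp (smt (verit, best) mult_left_mono mult_strict_left_mono)
qed

lemma convex_hypograph:
  assumes "concave_on S F"
  shows "convex {p. fst p \<in> S \<and> snd p \<le> F (fst p)}"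
proof (rule convexI)
  fix p q :: "'a \<times> real" and u v :: real
  assume "p \<in> {p. fst p \<in> S \<and> snd p \<le> F (fst p)}" "q \<in> {p. fst p \<in> S \<and> snd p \<le> F (fst p)}"
    and "0 \<le> u" "0 \<le> v" "u + v = 1"
  moreover have "u * F (fst p) + v * F (fst q) \<le> F (u *\<^sub>R fst p + v *\<^sub>R fst q)"
    using assms calculation by (simp add: concave_on_iff)
  moreover have "u * snd p + v * snd q \<le> u * F (fst p) + v * F (fst q)"
    using calculation by (simp add: add_mono mult_left_mono)
  moreover have "u *\<^sub>R fst p + v *\<^sub>R fst q \<in> S"
    using assms calculation concave_on_imp_convex by (force simp: convex_def)
  ultimately show "u *\<^sub>R p + v *\<^sub>R q \<in> {p. fst p \<in> S \<and> snd p \<le> F (fst p)}"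
    by simp
qed

text \<open>Separate the hypograph of \<open>F\<close>, recentred at \<open>\<zeta>0\<close>, from the open epigraph of
  \<open>lam * nrm\<close>; the normal of the separating hyperplane gives \<open>w\<close>.\<close>

lemma concave_le_norm_imp_linear_majorant:
  fixes F :: "real ^ 'm \<Rightarrow> real"
  assumes nrm: "is_norm nrm" and conc: "concave_on \<Xi> F" and \<zeta>0: "\<zeta>0 \<in> \<Xi>" and lam: "0 \<le> lam"
    and dom: "\<And>\<xi>. \<xi> \<in> \<Xi> \<Longrightarrow> F \<xi> \<le> lam * nrm (\<xi> - \<zeta>0)"
  obtains w where "dual_norm nrm w \<le> lam" "\<And>\<xi>. \<xi> \<in> \<Xi> \<Longrightarrow> F \<xi> \<le> w \<bullet> (\<xi> - \<zeta>0)"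
proof -
  define A where "A = {p. lam * nrm (fst p) < snd p}"
  define B where "B = (\<lambda>p. p - (\<zeta>0, 0)) ` {p. fst p \<in> \<Xi> \<and> snd p \<le> F (fst p)}"
  have "convex A"
    unfolding A_def using convex_on_is_norm[OF nrm] lam
    by (intro convex_strict_epigraph) (simp add: convex_on_cmul)
  moreover have "convex B"
    unfolding B_def by (intro convex_translation_subtract convex_hypograph conc)
  moreover have "(0, 1) \<in> A"
    using nrm by (simp add: A_def is_norm_zero)
  moreover have "B \<noteq> {}"
    using \<zeta>0 by (auto simp: B_def)
  moreover have "B \<inter> A = {}"
    using dom by (force simp: A_def B_def)
  ultimately obtain n b where "n \<noteq> 0" and nB: "\<forall>p\<in>B. n \<bullet> p \<le> b" and nA: "\<forall>p\<in>A. b \<le> n \<bullet> p"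
    using separating_hyperplane_sets by (metis empty_iff)
  obtain w0 c where n: "n = (w0, c)" by fastforce
  have hA: "b \<le> w0 \<bullet> v + c * y" if "lam * nrm v < y" for v y
    using nA that by (auto simp: A_def n)
  have hB: "w0 \<bullet> (\<xi> - \<zeta>0) + c * F \<xi> \<le> b" if "\<xi> \<in> \<Xi>" for \<xi>
    using nB that by (force simp: B_def n)
  have "b \<le> 0 + c * t" if "0 < t" for t
    using hA[of 0 t] that nrm by (simp add: is_norm_zero)
  then have c: "0 \<le> c" and b: "b \<le> 0"
    using affine_bounded_below_on_pos_reals by blast+
  have cone: "0 \<le> w0 \<bullet> v + c * (lam * nrm v)" for v
  proof (rule affine_bounded_below_on_pos_reals(1))
    fix t :: real assume "0 < t"
    then have "b \<le> w0 \<bullet> (t *\<^sub>R v) + c * (lam * nrm (t *\<^sub>R v) + 1)"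
      by (intro hA) simp
    then show "b \<le> c + (w0 \<bullet> v + c * (lam * nrm v)) * t"
      using \<open>0 < t\<close> nrm by (simp add: is_norm_scaleR algebra_simps)
  qed
  have "c \<noteq> 0"
  proof
    assume "c = 0"
    then have "w0 = 0" using cone[of "- w0"] by simp (meson inner_gt_zero_iff not_le)
    with \<open>c = 0\<close> \<open>n \<noteq> 0\<close> show False by (simp add: n zero_prod_def)
  qed
  with c have "0 < c" by simp
  show ?thesis
  proof
    have "(- (1 / c) *\<^sub>R w0) \<bullet> v \<le> lam * nrm v" for v
      using cone[of v] \<open>0 < c\<close> by (simp add: field_simps)
    then show "dual_norm nrm (- (1 / c) *\<^sub>R w0) \<le> lam"
      using dual_norm_le_iff[OF nrm lam] by blast
  next
    fix \<xi> assume "\<xi> \<in> \<Xi>"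
    then show "F \<xi> \<le> (- (1 / c) *\<^sub>R w0) \<bullet> (\<xi> - \<zeta>0)"
      using hB[of \<xi>] b \<open>0 < c\<close> by (simp add: field_simps)
  qed
qed

lemma concave_on_neg_scaled_convex:
  assumes "convex_on UNIV g" "convex S" "0 \<le> a"
  shows "concave_on S (\<lambda>x. - a * g x + c)"
proof -
  have "convex_on S (\<lambda>x. a * g x + - c)"
    using convex_on_subset[OF assms(1) subset_UNIV assms(2)] assms(2,3)
    by (intro convex_on_add convex_on_cmul) (auto simp: convex_on_const)
  then show ?thesis
    unfolding concave_on_def by simp
qed

section \<open>The CVaR constraint and weak duality\<close>

definition cvar_objective :: "real \<Rightarrow> ('a \<Rightarrow> real) \<Rightarrow> 'a measure \<Rightarrow> real \<Rightarrow> ereal" where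
  "cvar_objective \<epsilon> L P \<beta> =
    ereal \<beta> + ereal (1 / \<epsilon>) * enn2ereal (\<integral>\<^sup>+ \<xi>. ennreal (max (L \<xi> - \<beta>) 0) \<partial>P)"

definition worst_loss :: "(nat \<Rightarrow> 'x \<Rightarrow> 'a \<Rightarrow> real) \<Rightarrow> nat \<Rightarrow> (nat \<Rightarrow> real) \<Rightarrow> 'x \<Rightarrow> 'a \<Rightarrow> real"
  where "worst_loss f T \<alpha> x = (\<lambda>\<xi>. Max ((\<lambda>t. - \<alpha> t * f t x \<xi>) ` {1..T}))"

lemma mem_ZC_alpha_iff:
  "x \<in> ZC_alpha f T \<epsilon> PW \<alpha> \<longleftrightarrow> (\<forall>P\<in>PW. (INF \<beta>. cvar_objective \<epsilon> (worst_loss f T \<alpha> x) P \<beta>) \<le> 0)"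
  unfolding ZC_alpha_def cvar_objective_def worst_loss_def by (simp add: SUP_le_iff)

lemma cvar_objective_le:
  assumes "0 < \<epsilon>" "0 \<le> c" "(\<integral>\<^sup>+ \<xi>. ennreal (max (L \<xi> - \<beta>) 0) \<partial>P) \<le> ennreal c"
  shows "cvar_objective \<epsilon> L P \<beta> \<le> ereal (\<beta> + c / \<epsilon>)"
proof -
  have "enn2ereal (\<integral>\<^sup>+ \<xi>. ennreal (max (L \<xi> - \<beta>) 0) \<partial>P) \<le> ereal c"
    using assms(2,3) by (metis enn2ereal_ennreal less_eq_ennreal.rep_eq)
  then have "ereal (1 / \<epsilon>) * enn2ereal (\<integral>\<^sup>+ \<xi>. ennreal (max (L \<xi> - \<beta>) 0) \<partial>P) \<le> ereal (c / \<epsilon>)"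
    using ereal_mult_left_mono[of _ _ "ereal (1 / \<epsilon>)"] assms(1) by fastforce
  then show ?thesis
    unfolding cvar_objective_def by (metis add_left_mono plus_ereal.simps(1))
qed

lemma worst_loss_ge: "t \<in> {1..T} \<Longrightarrow> - \<alpha> t * f t x \<xi> \<le> worst_loss f T \<alpha> x \<xi>"
  unfolding worst_loss_def by (rule Max_ge) auto

lemma worst_loss_le_iff:
  "1 \<le> T \<Longrightarrow> worst_loss f T \<alpha> x \<xi> \<le> c \<longleftrightarrow> (\<forall>t\<in>{1..T}. - \<alpha> t * f t x \<xi> \<le> c)"
  unfolding worst_loss_def by (subst Max_le_iff) auto

lemma borel_measurable_worst_loss:
  fixes f :: "nat \<Rightarrow> 'x \<Rightarrow> 'a::topological_space \<Rightarrow> real"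
  assumes "\<And>t. t \<in> {1..T} \<Longrightarrow> continuous_on UNIV (f t x)"
  shows "worst_loss f T \<alpha> x \<in> borel_measurable borel"
  unfolding worst_loss_def
proof (intro borel_measurable_Max)
  fix t assume "t \<in> {1..T}"
  then have [measurable]: "f t x \<in> borel_measurable borel"
    using assms borel_measurable_continuous_onI by blast
  show "(\<lambda>\<xi>. - \<alpha> t * f t x \<xi>) \<in> borel_measurable borel" by measurable
qed simp

lemma AE_in_ambiguity_set: "P \<in> ambiguity_set nrm \<Xi> N \<zeta> \<delta> \<Longrightarrow> AE \<xi> in P. \<xi> \<in> \<Xi>"
  unfolding ambiguity_set_def by (auto intro: prob_space.AE_prob_1 simp: measure_def)

lemma AE_emp_dist: "1 \<le> N \<Longrightarrow> AE y in emp_dist N \<zeta>. y \<in> \<zeta> ` {1..N}"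
  unfolding emp_dist_def
  by (subst AE_distr_iff) (auto simp: AE_measure_pmf_iff borel_closed finite_imp_closed)

lemma nn_integral_emp_dist:
  assumes "1 \<le> N" "h \<in> borel_measurable borel"
  shows "(\<integral>\<^sup>+ y. h y \<partial>emp_dist N \<zeta>) = (\<Sum>i=1..N. h (\<zeta> i)) / ennreal (real N)"
  unfolding emp_dist_def using assms
  by (simp add: nn_integral_distr nn_integral_pmf_of_set ennreal_of_nat_eq_real_of_nat)

lemma nn_integral_le_coupling_cost:
  fixes g h :: "real ^ 'm \<Rightarrow> real"
  assumes nrm: "is_norm nrm" and \<pi>: "\<pi> \<in> couplings P Q"
    and AE: "AE \<xi> in P. \<xi> \<in> \<Xi>" "AE y in Q. y \<in> K"
    and [measurable]: "\<Xi> \<in> sets borel" "K \<in> sets borel"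
    and [measurable]: "g \<in> borel_measurable borel" "h \<in> borel_measurable borel"
    and lam: "0 \<le> lam" and h: "\<And>y. y \<in> K \<Longrightarrow> 0 \<le> h y"
    and bound: "\<And>\<xi> y. \<xi> \<in> \<Xi> \<Longrightarrow> y \<in> K \<Longrightarrow> g \<xi> \<le> h y + lam * nrm (\<xi> - y)"
  shows "(\<integral>\<^sup>+ \<xi>. g \<xi> \<partial>P)
    \<le> (\<integral>\<^sup>+ y. h y \<partial>Q) + ennreal lam * (\<integral>\<^sup>+ p. nrm (fst p - snd p) \<partial>\<pi>)"
proof -
  have sets: "sets \<pi> = sets (borel \<Otimes>\<^sub>M borel)" and P: "distr \<pi> borel fst = P"
    and Q: "distr \<pi> borel snd = Q"
    using \<pi> by (auto simp: couplings_def)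
  have [measurable]: "fst \<in> measurable \<pi> borel" "snd \<in> measurable \<pi> borel"
    "nrm \<in> borel_measurable borel"
    using measurable_cong_sets[OF sets refl] borel_measurable_is_norm[OF nrm] by auto
  have "AE p in \<pi>. fst p \<in> \<Xi> \<and> snd p \<in> K"
    using AE unfolding P[symmetric] Q[symmetric] by (simp add: AE_distr_iff)
  then have "AE p in \<pi>.
      ennreal (g (fst p)) \<le> ennreal (h (snd p)) + ennreal lam * nrm (fst p - snd p)"
  proof eventually_elim
    case (elim p)
    then have "ennreal (g (fst p)) \<le> ennreal (h (snd p) + lam * nrm (fst p - snd p))"
      by (intro ennreal_leI bound) auto
    also have "\<dots> = ennreal (h (snd p)) + ennreal lam * nrm (fst p - snd p)"
      using elim h lam nrm by (simp add: ennreal_plus ennreal_mult is_norm_nonneg)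
    finally show ?case .
  qed
  then have "(\<integral>\<^sup>+ p. g (fst p) \<partial>\<pi>)
      \<le> (\<integral>\<^sup>+ p. ennreal (h (snd p)) + ennreal lam * nrm (fst p - snd p) \<partial>\<pi>)"
    by (rule nn_integral_mono_AE)
  also have "\<dots> = (\<integral>\<^sup>+ p. h (snd p) \<partial>\<pi>) + ennreal lam * (\<integral>\<^sup>+ p. nrm (fst p - snd p) \<partial>\<pi>)"
    by (simp add: nn_integral_add nn_integral_cmult)
  finally show ?thesis
    unfolding P[symmetric] Q[symmetric] by (simp add: nn_integral_distr)
qed

lemma le_of_coupling_bounds:
  assumes W: "wasserstein1 nrm P Q \<le> ennreal \<delta>" and "0 \<le> \<delta>" "0 \<le> a" "0 \<le> lam"
    and bound: "\<And>\<pi>. \<pi> \<in> couplings P Q \<Longrightarrow>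
      X \<le> ennreal a + ennreal lam * (\<integral>\<^sup>+ p. nrm (fst p - snd p) \<partial>\<pi>)"
  shows "X \<le> ennreal (a + lam * \<delta>)"
proof (rule ennreal_le_epsilon)
  fix e :: real assume "0 < e"
  define \<eta> where "\<eta> = e / (lam + 1)"
  have "0 < \<eta>" "lam * \<eta> \<le> e"
    using \<open>0 < e\<close> \<open>0 \<le> lam\<close> by (auto simp: \<eta>_def field_simps)
  have "wasserstein1 nrm P Q < ennreal (\<delta> + \<eta>)"
    using W \<open>0 < \<eta>\<close> \<open>0 \<le> \<delta>\<close> by (auto intro: le_less_trans ennreal_lessI)
  then obtain \<pi> where \<pi>: "\<pi> \<in> couplings P Q"
    and cost: "(\<integral>\<^sup>+ p. nrm (fst p - snd p) \<partial>\<pi>) < ennreal (\<delta> + \<eta>)"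
    unfolding wasserstein1_def by (auto simp: INF_less_iff)
  have "X \<le> ennreal a + ennreal lam * ennreal (\<delta> + \<eta>)"
    using bound[OF \<pi>] cost
    by (meson add_left_mono less_imp_le mult_left_mono order_trans zero_le)
  also have "\<dots> = ennreal (a + lam * (\<delta> + \<eta>))"
    using \<open>0 < \<eta>\<close> \<open>0 \<le> \<delta>\<close>
    by (simp only: ennreal_plus[OF \<open>0 \<le> a\<close> mult_nonneg_nonneg[OF \<open>0 \<le> lam\<close>]]
        ennreal_mult[OF \<open>0 \<le> lam\<close>])
  also have "\<dots> \<le> ennreal (a + lam * \<delta> + e)"
    using \<open>lam * \<eta> \<le> e\<close> by (intro ennreal_leI) (simp add: distrib_left)
  also have "\<dots> = ennreal (a + lam * \<delta>) + ennreal e"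
    using \<open>0 \<le> a\<close> \<open>0 \<le> lam\<close> \<open>0 < e\<close> \<open>0 \<le> \<delta>\<close> by (intro ennreal_plus) auto
  finally show "X \<le> ennreal (a + lam * \<delta>) + ennreal e" .
qed

text \<open>The samples may repeat, so \<open>h (\<zeta> i) = s i\<close> cannot be asked for in general.\<close>

lemma measurable_sample_minimum:
  fixes \<zeta> :: "nat \<Rightarrow> real ^ 'm" and s :: "nat \<Rightarrow> real"
  obtains h where "h \<in> borel_measurable borel" "\<And>i. i \<in> {1..N} \<Longrightarrow> h (\<zeta> i) \<le> s i"
    "\<And>y. y \<in> \<zeta> ` {1..N} \<Longrightarrow> \<exists>i\<in>{1..N}. \<zeta> i = y \<and> h y = s i"
proof -
  define c where "c y = Min (s ` {i \<in> {1..N}. \<zeta> i = y})" for y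
  define h where "h y = (\<Sum>k\<in>\<zeta> ` {1..N}. indicator {k} y * c k)" for y
  have h_eq: "h y = c y" if "y \<in> \<zeta> ` {1..N}" for y
    using that by (simp add: h_def indicator_def sum.delta)
  show ?thesis
  proof
    show "h \<in> borel_measurable borel"
      unfolding h_def by measurable
    show "h (\<zeta> i) \<le> s i" if "i \<in> {1..N}" for i
      unfolding h_eq[OF imageI[OF that]] c_def using that by (intro Min_le) auto
    show "\<exists>i\<in>{1..N}. \<zeta> i = y \<and> h y = s i" if "y \<in> \<zeta> ` {1..N}" for y
    proof -
      have "c y \<in> s ` {i \<in> {1..N}. \<zeta> i = y}"
        unfolding c_def using that by (intro Min_in) auto
      then show ?thesis using h_eq[OF that] by auto
    qed
  qed
qed

lemma ambiguity_set_nn_integral_le: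
  fixes g :: "real ^ 'm \<Rightarrow> real"
  assumes nrm: "is_norm nrm" and N: "1 \<le> N" and "closed \<Xi>" and "0 \<le> \<delta>"
    and P: "P \<in> ambiguity_set nrm \<Xi> N \<zeta> \<delta>" and g: "g \<in> borel_measurable borel"
    and lam: "0 \<le> lam" and s: "\<And>i. i \<in> {1..N} \<Longrightarrow> 0 \<le> s i"
    and bound: "\<And>\<xi> i. \<xi> \<in> \<Xi> \<Longrightarrow> i \<in> {1..N} \<Longrightarrow> g \<xi> \<le> s i + lam * nrm (\<xi> - \<zeta> i)"
  shows "(\<integral>\<^sup>+ \<xi>. g \<xi> \<partial>P) \<le> ennreal ((\<Sum>i=1..N. s i) / N + lam * \<delta>)"
proof -
  obtain h where h: "h \<in> borel_measurable borel" and h_le: "\<And>i. i \<in> {1..N} \<Longrightarrow> h (\<zeta> i) \<le> s i"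
    and h_attained: "\<And>y. y \<in> \<zeta> ` {1..N} \<Longrightarrow> \<exists>i\<in>{1..N}. \<zeta> i = y \<and> h y = s i"
    using measurable_sample_minimum by blast
  have h_nonneg: "0 \<le> h y" if "y \<in> \<zeta> ` {1..N}" for y
    using h_attained[OF that] s by force
  have h_bound: "g \<xi> \<le> h y + lam * nrm (\<xi> - y)" if "\<xi> \<in> \<Xi>" "y \<in> \<zeta> ` {1..N}" for \<xi> y
    using h_attained[OF that(2)] bound[OF that(1)] by force
  have "(\<integral>\<^sup>+ y. h y \<partial>emp_dist N \<zeta>) = (\<Sum>i=1..N. ennreal (h (\<zeta> i))) / ennreal (real N)"
    using N h by (simp add: nn_integral_emp_dist)
  also have "\<dots> \<le> ennreal (\<Sum>i=1..N. s i) / ennreal (real N)"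
  proof (rule divide_right_mono_ennreal)
    have "(\<Sum>i=1..N. ennreal (h (\<zeta> i))) \<le> (\<Sum>i=1..N. ennreal (s i))"
      using h_le by (intro sum_mono ennreal_leI) auto
    then show "(\<Sum>i=1..N. ennreal (h (\<zeta> i))) \<le> ennreal (\<Sum>i=1..N. s i)"
      using s sum_ennreal[of "{1..N}" s] by simp
  qed
  also have "\<dots> = ennreal ((\<Sum>i=1..N. s i) / N)"
    using N s by (intro divide_ennreal sum_nonneg) auto
  finally have emp: "(\<integral>\<^sup>+ y. h y \<partial>emp_dist N \<zeta>) \<le> ennreal ((\<Sum>i=1..N. s i) / N)" .
  show ?thesis
  proof (rule le_of_coupling_bounds)
    show "wasserstein1 nrm P (emp_dist N \<zeta>) \<le> ennreal \<delta>"
      using P by (simp add: ambiguity_set_def)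
    show "0 \<le> (\<Sum>i=1..N. s i) / N"
      using s by (intro divide_nonneg_nonneg sum_nonneg) auto
    fix \<pi> assume "\<pi> \<in> couplings P (emp_dist N \<zeta>)"
    from nn_integral_le_coupling_cost[OF nrm this AE_in_ambiguity_set[OF P] AE_emp_dist[OF N]
        borel_closed[OF \<open>closed \<Xi>\<close>] _ g h lam h_nonneg h_bound]
    show "(\<integral>\<^sup>+ \<xi>. g \<xi> \<partial>P)
        \<le> ennreal ((\<Sum>i=1..N. s i) / N) + ennreal lam * (\<integral>\<^sup>+ p. nrm (fst p - snd p) \<partial>\<pi>)"
      using emp by (auto simp: borel_closed finite_imp_closed intro: order_trans add_right_mono)
  qed fact+
qed

lemma G_fun_add_le_0_iff:
  "G_fun f \<Xi> t z a x + ereal c \<le> 0 \<longleftrightarrow> (\<forall>\<xi>\<in>\<Xi>. z \<bullet> \<xi> - a * f t x \<xi> + c \<le> 0)"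
proof -
  have "G_fun f \<Xi> t z a x + ereal c \<le> 0 \<longleftrightarrow> G_fun f \<Xi> t z a x \<le> ereal (- c)"
    by (cases "G_fun f \<Xi> t z a x") auto
  also have "\<dots> \<longleftrightarrow> (\<forall>\<xi>\<in>\<Xi>. ereal (z \<bullet> \<xi> - a * f t x \<xi>) \<le> ereal (- c))"
    unfolding G_fun_def by (rule SUP_le_iff)
  also have "\<dots> \<longleftrightarrow> (\<forall>\<xi>\<in>\<Xi>. z \<bullet> \<xi> - a * f t x \<xi> + c \<le> 0)"
    by (intro ball_cong) auto
  finally show ?thesis .
qed

lemma ZC1_subset_ZC_alpha:
  assumes "1 \<le> T" "0 < \<epsilon>"
  shows "ZC1 f T \<Xi> \<subseteq> ZC_alpha f T \<epsilon> (ambiguity_set nrm \<Xi> N \<zeta> \<delta>) (\<lambda>_. 1)"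
proof
  fix x assume x: "x \<in> ZC1 f T \<Xi>"
  have "cvar_objective \<epsilon> (worst_loss f T (\<lambda>_. 1) x) P 0 \<le> 0"
    if P: "P \<in> ambiguity_set nrm \<Xi> N \<zeta> \<delta>" for P
  proof -
    have "AE \<xi> in P. ennreal (max (worst_loss f T (\<lambda>_. 1) x \<xi> - 0) 0) \<le> 0"
      using AE_in_ambiguity_set[OF P]
      by eventually_elim (use x assms in \<open>auto simp: ZC1_def worst_loss_le_iff\<close>)
    then have "(\<integral>\<^sup>+ \<xi>. ennreal (max (worst_loss f T (\<lambda>_. 1) x \<xi> - 0) 0) \<partial>P) \<le> ennreal 0"
      using nn_integral_mono_AE by fastforce
    from cvar_objective_le[OF assms(2) order_refl this] show ?thesis
      by (simp add: zero_ereal_def)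
  qed
  then show "x \<in> ZC_alpha f T \<epsilon> (ambiguity_set nrm \<Xi> N \<zeta> \<delta>) (\<lambda>_. 1)"
    unfolding mem_ZC_alpha_iff by (meson INF_lower2 UNIV_I)
qed

lemma mem_ZC_alpha_of_dual_certificate:
  fixes f :: "nat \<Rightarrow> real ^ 'n \<Rightarrow> real ^ 'm \<Rightarrow> real"
  assumes nrm: "is_norm nrm" and N: "1 \<le> N" and T: "1 \<le> T" and "0 < \<epsilon>" "0 \<le> \<delta>" "closed \<Xi>"
    and cont: "\<And>t. t \<in> {1..T} \<Longrightarrow> continuous_on UNIV (f t x)"
    and lam: "0 \<le> lam" and s: "\<forall>i\<in>{1..N}. 0 \<le> s i"
    and budget: "lam * \<delta> + 1 / real N * (\<Sum>i=1..N. s i) \<le> \<epsilon>"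
    and G: "\<forall>i\<in>{1..N}. \<forall>t\<in>{1..T}. \<forall>\<xi>\<in>\<Xi>.
      z i t \<bullet> \<xi> - \<alpha> t * f t x \<xi> + (1 - z i t \<bullet> \<zeta> i - s i) \<le> 0"
    and dn: "\<forall>i\<in>{1..N}. \<forall>t\<in>{1..T}. dual_norm nrm (z i t) \<le> lam"
  shows "x \<in> ZC_alpha f T \<epsilon> (ambiguity_set nrm \<Xi> N \<zeta> \<delta>) \<alpha>"
proof -
  have bound: "max (worst_loss f T \<alpha> x \<xi> - - 1) 0 \<le> s i + lam * nrm (\<xi> - \<zeta> i)"
    if "\<xi> \<in> \<Xi>" "i \<in> {1..N}" for \<xi> i
  proof -
    have "- \<alpha> t * f t x \<xi> \<le> s i + lam * nrm (\<xi> - \<zeta> i) - 1" if "t \<in> {1..T}" for t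
    proof -
      have "z i t \<bullet> (\<zeta> i - \<xi>) \<le> dual_norm nrm (z i t) * nrm (\<zeta> i - \<xi>)"
        by (rule inner_le_dual_norm[OF nrm])
      also have "\<dots> \<le> lam * nrm (\<xi> - \<zeta> i)"
        using dn \<open>i \<in> {1..N}\<close> that nrm
        by (simp add: mult_right_mono is_norm_nonneg is_norm_minus_commute[of nrm "\<zeta> i"])
      finally show ?thesis
        using G \<open>\<xi> \<in> \<Xi>\<close> \<open>i \<in> {1..N}\<close> that by (force simp: inner_diff_right)
    qed
    then have "worst_loss f T \<alpha> x \<xi> \<le> s i + lam * nrm (\<xi> - \<zeta> i) - 1"
      using T by (simp add: worst_loss_le_iff)
    then show ?thesis
      using s \<open>i \<in> {1..N}\<close> lam nrm by (simp add: is_norm_nonneg)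
  qed
  have "cvar_objective \<epsilon> (worst_loss f T \<alpha> x) P (- 1) \<le> 0"
    if P: "P \<in> ambiguity_set nrm \<Xi> N \<zeta> \<delta>" for P
  proof -
    have "(\<integral>\<^sup>+ \<xi>. max (worst_loss f T \<alpha> x \<xi> - - 1) 0 \<partial>P)
        \<le> ennreal ((\<Sum>i=1..N. s i) / N + lam * \<delta>)"
      using cont borel_measurable_worst_loss[of T f x \<alpha>] s bound
      by (intro ambiguity_set_nn_integral_le[OF nrm N \<open>closed \<Xi>\<close> \<open>0 \<le> \<delta>\<close> P _ lam]) auto
    also have "\<dots> \<le> ennreal \<epsilon>"
      using budget by (intro ennreal_leI) simp
    finally have "(\<integral>\<^sup>+ \<xi>. max (worst_loss f T \<alpha> x \<xi> - - 1) 0 \<partial>P) \<le> ennreal \<epsilon>" .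
    from cvar_objective_le[OF \<open>0 < \<epsilon>\<close> _ this] show ?thesis
      using \<open>0 < \<epsilon>\<close> by (simp add: zero_ereal_def)
  qed
  then show ?thesis
    unfolding mem_ZC_alpha_iff by (meson INF_lower2 UNIV_I)
qed

lemma ZC2_subset_ZC:
  fixes f :: "nat \<Rightarrow> real ^ 'n \<Rightarrow> real ^ 'm \<Rightarrow> real"
  assumes nrm: "is_norm nrm" and N: "1 \<le> N" and T: "1 \<le> T" and eps: "0 < \<epsilon>" "\<epsilon> < 1"
    and "0 \<le> \<delta>" "closed \<Xi>" and samples: "\<And>i. i \<in> {1..N} \<Longrightarrow> \<zeta> i \<in> \<Xi>"
    and cont: "\<And>t x. t \<in> {1..T} \<Longrightarrow> continuous_on UNIV (f t x)"
  shows "ZC2 f T \<Xi> nrm N \<zeta> \<delta> \<epsilon> \<subseteq> ZC f T \<epsilon> (ambiguity_set nrm \<Xi> N \<zeta> \<delta>)"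
proof
  fix x assume "x \<in> ZC2 f T \<Xi> nrm N \<zeta> \<delta> \<epsilon>"
  then obtain lam \<alpha> s z where lam: "0 \<le> lam" and \<alpha>: "\<forall>t\<in>{1..T}. 0 \<le> \<alpha> t"
    and s: "\<forall>i\<in>{1..N}. 0 \<le> s i" and budget: "lam * \<delta> + 1 / real N * (\<Sum>i=1..N. s i) \<le> \<epsilon>"
    and G: "\<forall>i\<in>{1..N}. \<forall>t\<in>{1..T}. \<forall>\<xi>\<in>\<Xi>.
      z i t \<bullet> \<xi> - \<alpha> t * f t x \<xi> + (1 - z i t \<bullet> \<zeta> i - s i) \<le> 0"
    and dn: "\<forall>i\<in>{1..N}. \<forall>t\<in>{1..T}. dual_norm nrm (z i t) \<le> lam"
    unfolding ZC2_def G_fun_add_le_0_iff by auto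
  have "\<forall>t\<in>{1..T}. 0 < \<alpha> t"
  proof (rule ccontr)
    assume "\<not> (\<forall>t\<in>{1..T}. 0 < \<alpha> t)"
    then obtain t where t: "t \<in> {1..T}" "\<alpha> t = 0" using \<alpha> by force
    have "1 \<le> s i" if "i \<in> {1..N}" for i
      using G samples that t by fastforce
    then have "real N \<le> (\<Sum>i=1..N. s i)"
      using sum_mono[of "{1..N}" "\<lambda>_. 1" s] by simp
    then have "1 \<le> 1 / real N * (\<Sum>i=1..N. s i)"
      using N by (simp add: field_simps)
    then show False
      using budget eps lam \<open>0 \<le> \<delta>\<close> by (smt (verit) mult_nonneg_nonneg)
  qed
  moreover have "x \<in> ZC_alpha f T \<epsilon> (ambiguity_set nrm \<Xi> N \<zeta> \<delta>) \<alpha>"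
    using cont by (intro mem_ZC_alpha_of_dual_certificate[where f = f and x = x,
          OF nrm N T eps(1) \<open>0 \<le> \<delta>\<close> \<open>closed \<Xi>\<close> _ lam s budget G dn])
  ultimately show "x \<in> ZC f T \<epsilon> (ambiguity_set nrm \<Xi> N \<zeta> \<delta>)"
    unfolding ZC_def by blast
qed


section \<open>Finite transport plans\<close>

definition mix_pmf :: "real \<Rightarrow> 'a pmf \<Rightarrow> 'a pmf \<Rightarrow> 'a pmf" where
  "mix_pmf \<theta> p q = bind_pmf (bernoulli_pmf \<theta>) (\<lambda>b. if b then p else q)"

lemma set_mix_pmf_subset: "set_pmf (mix_pmf \<theta> p q) \<subseteq> set_pmf p \<union> set_pmf q"
  unfolding mix_pmf_def by (auto split: if_splits)

lemma map_mix_pmf: "map_pmf f (mix_pmf \<theta> p q) = mix_pmf \<theta> (map_pmf f p) (map_pmf f q)"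
  unfolding mix_pmf_def map_bind_pmf by (metis (full_types))

lemma mix_pmf_same: "mix_pmf \<theta> p p = p"
  unfolding mix_pmf_def by simp

lemma integral_mix_pmf:
  fixes h :: "'a \<Rightarrow> real"
  assumes "0 \<le> \<theta>" "\<theta> \<le> 1" "finite (set_pmf p)" "finite (set_pmf q)"
  shows "(\<integral>a. h a \<partial>mix_pmf \<theta> p q) = \<theta> * (\<integral>a. h a \<partial>p) + (1 - \<theta>) * (\<integral>a. h a \<partial>q)"
proof -
  let ?A = "set_pmf p \<union> set_pmf q"
  have "(\<integral>a. h a \<partial>mix_pmf \<theta> p q) = (\<Sum>a\<in>?A. h a * pmf (mix_pmf \<theta> p q) a)"
    using assms set_mix_pmf_subset[of \<theta> p q] by (intro integral_measure_pmf_real) auto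
  also have "\<dots> = \<theta> * (\<Sum>a\<in>?A. h a * pmf p a) + (1 - \<theta>) * (\<Sum>a\<in>?A. h a * pmf q a)"
    using assms(1,2)
    by (simp add: mix_pmf_def pmf_bind sum_distrib_left sum.distrib[symmetric] algebra_simps)
  also have "\<dots> = \<theta> * (\<integral>a. h a \<partial>p) + (1 - \<theta>) * (\<integral>a. h a \<partial>q)"
    using assms by (subst (1 2) integral_measure_pmf_real[of ?A]) auto
  finally show ?thesis .
qed

type_synonym 'a plan = "(nat \<times> 'a \<times> real) pmf"

text \<open>A plan moves the mass \<open>1/N\<close> of each sample \<open>i\<close> to finitely many points \<open>\<xi>\<close>; the
  weight \<open>u \<in> [0, 1]\<close> of an atom \<open>(i, \<xi>, u)\<close> is the fraction of it counted in the CVaR tail.\<close>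

definition finite_plan :: "nat \<Rightarrow> 'a set \<Rightarrow> 'a plan \<Rightarrow> bool" where
  "finite_plan N \<Xi> q \<longleftrightarrow> finite (set_pmf q) \<and> map_pmf fst q = pmf_of_set {1..N}
     \<and> (\<forall>(i, \<xi>, u)\<in>set_pmf q. \<xi> \<in> \<Xi> \<and> 0 \<le> u \<and> u \<le> 1)"

definition plan_mass :: "'a plan \<Rightarrow> real" where
  "plan_mass q = (\<integral>(i, \<xi>, u). u \<partial>q)"

definition plan_loss :: "('a \<Rightarrow> real) \<Rightarrow> 'a plan \<Rightarrow> real" where
  "plan_loss L q = (\<integral>(i, \<xi>, u). u * L \<xi> \<partial>q)"

definition plan_cost :: "('a::minus \<Rightarrow> real) \<Rightarrow> (nat \<Rightarrow> 'a) \<Rightarrow> 'a plan \<Rightarrow> real" where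
  "plan_cost nrm \<zeta> q = (\<integral>(i, \<xi>, u). nrm (\<xi> - \<zeta> i) \<partial>q)"

definition plan_statistics ::
    "('a::minus \<Rightarrow> real) \<Rightarrow> ('a \<Rightarrow> real) \<Rightarrow> (nat \<Rightarrow> 'a) \<Rightarrow> 'a plan \<Rightarrow> real \<times> real \<times> real" where
  "plan_statistics L nrm \<zeta> q = (plan_mass q, plan_loss L q, plan_cost nrm \<zeta> q)"

definition plan_distr :: "'a::topological_space plan \<Rightarrow> 'a measure" where
  "plan_distr q = distr (measure_pmf q) borel (\<lambda>(i, \<xi>, u). \<xi>)"

definition plan_coupling :: "(nat \<Rightarrow> 'a) \<Rightarrow> 'a::topological_space plan \<Rightarrow> ('a \<times> 'a) measure" where
  "plan_coupling \<zeta> q = distr (measure_pmf q) (borel \<Otimes>\<^sub>M borel) (\<lambda>(i, \<xi>, u). (\<xi>, \<zeta> i))"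

definition det_plan :: "nat \<Rightarrow> (nat \<Rightarrow> 'a) \<Rightarrow> (nat \<Rightarrow> real) \<Rightarrow> 'a plan" where
  "det_plan N xs us = map_pmf (\<lambda>i. (i, xs i, us i)) (pmf_of_set {1..N})"

lemma finite_plan_mix_pmf:
  assumes "finite_plan N \<Xi> p" "finite_plan N \<Xi> q"
  shows "finite_plan N \<Xi> (mix_pmf \<theta> p q)"
  using assms set_mix_pmf_subset[of \<theta> p q]
  unfolding finite_plan_def by (auto simp: map_mix_pmf mix_pmf_same intro: finite_subset)

lemma convex_plan_statistics: "convex (plan_statistics L nrm \<zeta> ` {q. finite_plan N \<Xi> q})"
proof (rule convexI)
  fix x y :: "real \<times> real \<times> real" and u v :: real
  assume "x \<in> plan_statistics L nrm \<zeta> ` {q. finite_plan N \<Xi> q}"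
    "y \<in> plan_statistics L nrm \<zeta> ` {q. finite_plan N \<Xi> q}" and uv: "0 \<le> u" "0 \<le> v" "u + v = 1"
  then obtain p q where pq: "finite_plan N \<Xi> p" "finite_plan N \<Xi> q"
    and xy: "x = plan_statistics L nrm \<zeta> p" "y = plan_statistics L nrm \<zeta> q"
    by blast
  have "(\<integral>a. h a \<partial>mix_pmf u p q) = u * (\<integral>a. h a \<partial>p) + v * (\<integral>a. h a \<partial>q)"
    for h :: "nat \<times> 'a \<times> real \<Rightarrow> real"
    using pq uv by (subst integral_mix_pmf) (auto simp: finite_plan_def)
  then have "u *\<^sub>R x + v *\<^sub>R y = plan_statistics L nrm \<zeta> (mix_pmf u p q)"
    by (simp add: xy plan_statistics_def plan_mass_def plan_loss_def plan_cost_def)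
  then show "u *\<^sub>R x + v *\<^sub>R y \<in> plan_statistics L nrm \<zeta> ` {q. finite_plan N \<Xi> q}"
    using finite_plan_mix_pmf[OF pq] by blast
qed

lemma finite_plan_det_plan:
  assumes "1 \<le> N" "\<And>i. i \<in> {1..N} \<Longrightarrow> xs i \<in> \<Xi> \<and> 0 \<le> us i \<and> us i \<le> 1"
  shows "finite_plan N \<Xi> (det_plan N xs us)"
  using assms unfolding finite_plan_def det_plan_def by (auto simp: pmf.map_comp o_def)

lemma integral_det_plan:
  fixes h :: "nat \<times> 'a \<times> real \<Rightarrow> real"
  assumes "1 \<le> N"
  shows "(\<integral>a. h a \<partial>det_plan N xs us) = (\<Sum>i=1..N. h (i, xs i, us i)) / N"
  using assms by (simp add: det_plan_def integral_pmf_of_set)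

lemma plan_mass_det_plan: "1 \<le> N \<Longrightarrow> plan_mass (det_plan N xs us) = (\<Sum>i=1..N. us i) / N"
  and plan_loss_det_plan:
    "1 \<le> N \<Longrightarrow> plan_loss L (det_plan N xs us) = (\<Sum>i=1..N. us i * L (xs i)) / N"
  and plan_cost_det_plan:
    "1 \<le> N \<Longrightarrow> plan_cost nrm \<zeta> (det_plan N xs us) = (\<Sum>i=1..N. nrm (xs i - \<zeta> i)) / N"
  by (simp_all add: plan_mass_def plan_loss_def plan_cost_def integral_det_plan)

lemma plan_coupling_in_couplings:
  fixes q :: "(real ^ 'm) plan"
  assumes "finite_plan N \<Xi> q"
  shows "plan_coupling \<zeta> q \<in> couplings (plan_distr q) (emp_dist N \<zeta>)"
proof -
  have "distr (plan_coupling \<zeta> q) borel snd = distr (distr q (count_space UNIV) fst) borel \<zeta>"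
    unfolding plan_coupling_def
    by (subst (1 2) distr_distr) (auto simp: comp_def split_beta' space_pair_measure)
  also have "\<dots> = emp_dist N \<zeta>"
    using assms unfolding emp_dist_def finite_plan_def map_pmf_rep_eq[symmetric] by simp
  finally have "distr (plan_coupling \<zeta> q) borel snd = emp_dist N \<zeta>" .
  moreover have "distr (plan_coupling \<zeta> q) borel fst = plan_distr q"
    unfolding plan_coupling_def plan_distr_def
    by (subst distr_distr) (auto simp: comp_def split_beta' space_pair_measure)
  moreover have "prob_space (plan_coupling \<zeta> q)"
    unfolding plan_coupling_def
    by (intro prob_space.prob_space_distr prob_space_measure_pmf) (simp add: space_pair_measure)
  ultimately show ?thesis
    unfolding couplings_def by (simp add: plan_coupling_def)
qed

lemma nn_integral_plan_coupling:
  fixes q :: "(real ^ 'm) plan"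
  assumes nrm: "is_norm nrm" and "finite_plan N \<Xi> q"
  shows "(\<integral>\<^sup>+ p. nrm (fst p - snd p) \<partial>plan_coupling \<zeta> q) = ennreal (plan_cost nrm \<zeta> q)"
proof -
  have [measurable]: "nrm \<in> borel_measurable borel"
    by (rule borel_measurable_is_norm[OF nrm])
  have "(\<integral>\<^sup>+ p. nrm (fst p - snd p) \<partial>plan_coupling \<zeta> q)
      = (\<integral>\<^sup>+ a. nrm (fst (snd a) - \<zeta> (fst a)) \<partial>q)"
    unfolding plan_coupling_def
    by (subst nn_integral_distr) (auto simp: split_beta' space_pair_measure)
  also have "\<dots> = ennreal (plan_cost nrm \<zeta> q)"
    unfolding plan_cost_def split_beta' using assms
    by (intro nn_integral_eq_integral)
      (simp_all add: finite_plan_def integrable_measure_pmf_finite is_norm_nonneg)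
  finally show ?thesis .
qed

lemma plan_distr_in_ambiguity_set:
  fixes q :: "(real ^ 'm) plan"
  assumes nrm: "is_norm nrm" and q: "finite_plan N \<Xi> q" and "closed \<Xi>"
    and cost: "plan_cost nrm \<zeta> q \<le> \<delta>"
  shows "plan_distr q \<in> ambiguity_set nrm \<Xi> N \<zeta> \<delta>"
proof -
  have "wasserstein1 nrm (plan_distr q) (emp_dist N \<zeta>) \<le> ennreal \<delta>"
    unfolding wasserstein1_def
    using nn_integral_plan_coupling[OF nrm q] ennreal_leI[OF cost]
    by (intro INF_lower2[OF plan_coupling_in_couplings[OF q]]) simp
  moreover have "emeasure (plan_distr q) \<Xi> = 1"
    unfolding plan_distr_def using q borel_closed[OF \<open>closed \<Xi>\<close>]
    by (subst emeasure_distr)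
      (auto intro!: measure_pmf.emeasure_eq_1_AE simp: AE_measure_pmf_iff finite_plan_def)
  ultimately show ?thesis
    unfolding ambiguity_set_def plan_distr_def
    by (simp add: prob_space.prob_space_distr prob_space_measure_pmf)
qed

lemma nn_integral_plan_distr:
  fixes h :: "'a::topological_space \<Rightarrow> real"
  assumes "finite (set_pmf q)" "h \<in> borel_measurable borel" "\<And>x. 0 \<le> h x"
  shows "(\<integral>\<^sup>+ \<xi>. h \<xi> \<partial>plan_distr q) = ennreal (\<integral>(i, \<xi>, u). h \<xi> \<partial>q)"
  unfolding plan_distr_def using assms
  by (subst nn_integral_distr)
    (auto simp: split_beta' integrable_measure_pmf_finite intro!: nn_integral_eq_integral)

lemma cvar_objective_plan_distr_ge:
  assumes q: "finite_plan N \<Xi> q" and [measurable]: "L \<in> borel_measurable borel" and "0 < \<epsilon>"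
  shows "ereal (\<beta> + (plan_loss L q - \<beta> * plan_mass q) / \<epsilon>) \<le> cvar_objective \<epsilon> L (plan_distr q) \<beta>"
proof -
  have fin: "finite (set_pmf q)"
    and supp: "\<And>i \<xi> u. (i, \<xi>, u) \<in> set_pmf q \<Longrightarrow> 0 \<le> u \<and> u \<le> 1"
    using q by (auto simp: finite_plan_def)
  define X where "X = (\<integral>(i, \<xi>, u). max (L \<xi> - \<beta>) 0 \<partial>q)"
  have "(\<integral>\<^sup>+ \<xi>. max (L \<xi> - \<beta>) 0 \<partial>plan_distr q) = ennreal X"
    unfolding X_def using fin by (intro nn_integral_plan_distr) auto
  moreover have "0 \<le> X"
    unfolding X_def by (intro integral_nonneg_AE) (auto split: prod.split)
  moreover have "plan_loss L q - \<beta> * plan_mass q = (\<integral>(i, \<xi>, u). u * (L \<xi> - \<beta>) \<partial>q)"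
    unfolding plan_loss_def plan_mass_def using fin
    by (simp add: split_beta' integrable_measure_pmf_finite right_diff_distrib integral_diff)
  moreover have "\<dots> \<le> X"
    unfolding X_def using fin supp
    by (intro integral_mono_AE)
      (auto simp: integrable_measure_pmf_finite AE_measure_pmf_iff mult_left_le_one_le
        mult_nonneg_nonpos max_def)
  ultimately show ?thesis
    unfolding cvar_objective_def using \<open>0 < \<epsilon>\<close> by (simp add: divide_right_mono)
qed

lemma plan_loss_nonpos:
  fixes q :: "(real ^ 'm) plan"
  assumes nrm: "is_norm nrm" and "closed \<Xi>" and "0 < \<epsilon>" and L: "L \<in> borel_measurable borel"
    and robust: "\<And>P. P \<in> ambiguity_set nrm \<Xi> N \<zeta> \<delta> \<Longrightarrow> (INF \<beta>. cvar_objective \<epsilon> L P \<beta>) \<le> 0"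
    and q: "finite_plan N \<Xi> q" "plan_mass q = \<epsilon>" "plan_cost nrm \<zeta> q \<le> \<delta>"
  shows "plan_loss L q \<le> 0"
proof -
  have "ereal (plan_loss L q / \<epsilon>) \<le> cvar_objective \<epsilon> L (plan_distr q) \<beta>" for \<beta>
    using cvar_objective_plan_distr_ge[OF q(1) L \<open>0 < \<epsilon>\<close>, of \<beta>] q(2) \<open>0 < \<epsilon>\<close>
    by (simp add: field_simps)
  then have "ereal (plan_loss L q / \<epsilon>) \<le> 0"
    using robust[OF plan_distr_in_ambiguity_set[OF nrm q(1) \<open>closed \<Xi>\<close> q(3)]]
    by (meson INF_greatest order_trans)
  then show ?thesis
    using \<open>0 < \<epsilon>\<close> by (simp add: divide_le_0_iff)
qed

section \<open>Lagrange multipliers and the dual certificate\<close>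

lemma plan_statistics_separation:
  fixes L :: "real ^ 'm \<Rightarrow> real"
  assumes nrm: "is_norm nrm" and N: "1 \<le> N" and "0 < \<epsilon>" and "closed \<Xi>"
    and samples: "\<And>i. i \<in> {1..N} \<Longrightarrow> \<zeta> i \<in> \<Xi>" and L: "L \<in> borel_measurable borel"
    and robust: "\<And>P. P \<in> ambiguity_set nrm \<Xi> N \<zeta> \<delta> \<Longrightarrow> (INF \<beta>. cvar_objective \<epsilon> L P \<beta>) \<le> 0"
  obtains A B C where "(A, B, C) \<noteq> 0" "0 \<le> B" "C \<le> 0"
    "\<And>q. finite_plan N \<Xi> q \<Longrightarrow>
       A * plan_mass q + B * plan_loss L q + C * plan_cost nrm \<zeta> q \<le> A * \<epsilon> + C * \<delta>"
proof -
  define S where "S = plan_statistics L nrm \<zeta> ` {q. finite_plan N \<Xi> q}"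
  define U :: "(real \<times> real \<times> real) set" where "U = {\<epsilon>} \<times> {0<..} \<times> {..<\<delta>}"
  have "convex S"
    unfolding S_def by (rule convex_plan_statistics)
  moreover have "convex U"
    unfolding U_def by (intro convex_Times convex_singleton convex_real_interval)
  moreover have "S \<noteq> {}"
    using finite_plan_det_plan[where xs = \<zeta> and us = "\<lambda>_. 0"] N samples by (auto simp: S_def)
  moreover have "(\<epsilon>, 1, \<delta> - 1) \<in> U"
    by (simp add: U_def)
  moreover have "S \<inter> U = {}"
    using plan_loss_nonpos[OF nrm \<open>closed \<Xi>\<close> \<open>0 < \<epsilon>\<close> L robust]
    by (fastforce simp: S_def U_def plan_statistics_def)
  ultimately obtain n \<gamma> where "n \<noteq> 0" and nS: "\<forall>x\<in>S. n \<bullet> x \<le> \<gamma>" and nU: "\<forall>x\<in>U. \<gamma> \<le> n \<bullet> x"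
    using separating_hyperplane_sets by (metis empty_iff)
  obtain A B C where n: "n = (A, B, C)"
    by (metis prod.exhaust)
  have "\<gamma> \<le> A * \<epsilon> + B * l + C * c" if "0 < l" "c < \<delta>" for l c
    using nU that by (auto simp: U_def n add.assoc)
  then have "0 \<le> B" "C \<le> 0" and \<gamma>: "\<gamma> \<le> A * \<epsilon> + C * \<delta>"
    using linear_bounded_below_on_quadrant by metis+
  moreover have "A * plan_mass q + B * plan_loss L q + C * plan_cost nrm \<zeta> q \<le> \<gamma>"
    if "finite_plan N \<Xi> q" for q
    using nS that by (auto simp: S_def n plan_statistics_def)
  moreover have "(A, B, C) \<noteq> 0"
    using \<open>n \<noteq> 0\<close> n by simp
  ultimately show ?thesis
    by (intro that[of A B C]) (auto intro: order_trans)
qed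

text \<open>The plans that keep the samples in place, with tail weight \<open>0\<close> or \<open>1\<close>, rule out a
  separating functional that ignores the loss.\<close>

lemma plan_loss_separation:
  fixes L :: "real ^ 'm \<Rightarrow> real"
  assumes nrm: "is_norm nrm" and N: "1 \<le> N" and eps: "0 < \<epsilon>" "\<epsilon> < 1" and "0 < \<delta>"
    and "closed \<Xi>" and samples: "\<And>i. i \<in> {1..N} \<Longrightarrow> \<zeta> i \<in> \<Xi>" and L: "L \<in> borel_measurable borel"
    and robust: "\<And>P. P \<in> ambiguity_set nrm \<Xi> N \<zeta> \<delta> \<Longrightarrow> (INF \<beta>. cvar_objective \<epsilon> L P \<beta>) \<le> 0"
  obtains A B C where "0 < B" "C \<le> 0" "0 \<le> A * \<epsilon> + C * \<delta>"
    "\<And>q. finite_plan N \<Xi> q \<Longrightarrow>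
       A * plan_mass q + B * plan_loss L q + C * plan_cost nrm \<zeta> q \<le> A * \<epsilon> + C * \<delta>"
proof -
  obtain A B C where ABC: "(A, B, C) \<noteq> 0" "0 \<le> B" "C \<le> 0"
    and sep: "\<And>q. finite_plan N \<Xi> q \<Longrightarrow>
      A * plan_mass q + B * plan_loss L q + C * plan_cost nrm \<zeta> q \<le> A * \<epsilon> + C * \<delta>"
    using plan_statistics_separation[where \<zeta> = \<zeta> and \<delta> = \<delta>,
        OF nrm N \<open>0 < \<epsilon>\<close> \<open>closed \<Xi>\<close> samples L robust]
    by blast
  have plan0: "finite_plan N \<Xi> (det_plan N \<zeta> (\<lambda>_. 0))"
    and plan1: "finite_plan N \<Xi> (det_plan N \<zeta> (\<lambda>_. 1))"
    using samples by (auto intro!: finite_plan_det_plan N)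
  have zero: "0 \<le> A * \<epsilon> + C * \<delta>"
    using sep[OF plan0] N nrm
    by (simp add: plan_mass_det_plan plan_loss_det_plan plan_cost_det_plan is_norm_zero)
  have "0 < B"
  proof (rule ccontr)
    assume "\<not> 0 < B"
    with \<open>0 \<le> B\<close> have "B = 0" by simp
    have "A \<le> A * \<epsilon> + C * \<delta>"
      using sep[OF plan1] N nrm \<open>B = 0\<close>
      by (simp add: plan_mass_det_plan plan_cost_det_plan is_norm_zero)
    moreover have "C * \<delta> \<le> 0"
      using \<open>C \<le> 0\<close> \<open>0 < \<delta>\<close> by (simp add: mult_nonpos_nonneg)
    ultimately have "A * (1 - \<epsilon>) \<le> 0"
      by (simp add: algebra_simps)
    then have "A * \<epsilon> \<le> 0"
      using eps by (simp add: mult_le_0_iff)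
    with zero \<open>C * \<delta> \<le> 0\<close> have "A * \<epsilon> = 0" "C * \<delta> = 0"
      by linarith+
    then have "A = 0" "C = 0"
      using eps \<open>0 < \<delta>\<close> by simp_all
    with \<open>B = 0\<close> ABC(1) show False by (simp add: zero_prod_def)
  qed
  from that[OF this ABC(3) zero sep] show ?thesis .
qed

lemma plan_lagrange_multipliers:
  fixes L :: "real ^ 'm \<Rightarrow> real"
  assumes nrm: "is_norm nrm" and N: "1 \<le> N" and eps: "0 < \<epsilon>" "\<epsilon> < 1" and "0 < \<delta>"
    and "closed \<Xi>" and samples: "\<And>i. i \<in> {1..N} \<Longrightarrow> \<zeta> i \<in> \<Xi>" and L: "L \<in> borel_measurable borel"
    and robust: "\<And>P. P \<in> ambiguity_set nrm \<Xi> N \<zeta> \<delta> \<Longrightarrow> (INF \<beta>. cvar_objective \<epsilon> L P \<beta>) \<le> 0"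
    and \<xi>0: "\<xi>0 \<in> \<Xi>" "0 < L \<xi>0"
  obtains p lam where "0 < p" "0 \<le> lam"
    "\<And>q. finite_plan N \<Xi> q \<Longrightarrow>
      plan_loss L q \<le> p * (\<epsilon> - plan_mass q) + lam * (plan_cost nrm \<zeta> q - \<delta>)"
proof -
  obtain A B C where "0 < B" "C \<le> 0" and zero: "0 \<le> A * \<epsilon> + C * \<delta>"
    and sep: "\<And>q. finite_plan N \<Xi> q \<Longrightarrow>
      A * plan_mass q + B * plan_loss L q + C * plan_cost nrm \<zeta> q \<le> A * \<epsilon> + C * \<delta>"
    using plan_loss_separation[where \<zeta> = \<zeta> and \<delta> = \<delta>,
        OF nrm N eps \<open>0 < \<delta>\<close> \<open>closed \<Xi>\<close> samples L robust]
    by metis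
  define p where "p = A / B"
  define lam where "lam = - C / B"
  have lam: "0 \<le> lam"
    using \<open>0 < B\<close> \<open>C \<le> 0\<close> by (simp add: lam_def divide_nonpos_pos)
  have mult: "plan_loss L q \<le> p * (\<epsilon> - plan_mass q) + lam * (plan_cost nrm \<zeta> q - \<delta>)"
    if "finite_plan N \<Xi> q" for q
  proof -
    have "B * plan_loss L q \<le> A * (\<epsilon> - plan_mass q) + C * (\<delta> - plan_cost nrm \<zeta> q)"
      using sep[OF that] by (simp add: algebra_simps)
    then have "plan_loss L q \<le> (A * (\<epsilon> - plan_mass q) + C * (\<delta> - plan_cost nrm \<zeta> q)) / B"
      using \<open>0 < B\<close> by (simp add: le_divide_eq mult.commute)
    also have "\<dots> = p * (\<epsilon> - plan_mass q) + lam * (plan_cost nrm \<zeta> q - \<delta>)"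
      using \<open>0 < B\<close> by (simp add: p_def lam_def field_simps)
    finally show ?thesis .
  qed
  have "0 < p"
  proof (rule ccontr)
    assume "\<not> 0 < p"
    moreover have "lam * \<delta> \<le> p * \<epsilon>"
      using zero \<open>0 < B\<close> by (simp add: p_def lam_def field_simps)
    moreover have "p * \<epsilon> \<le> 0" "0 \<le> lam * \<delta>"
      using \<open>\<not> 0 < p\<close> eps lam \<open>0 < \<delta>\<close> by (simp_all add: mult_nonpos_nonneg)
    ultimately have "p * \<epsilon> = 0" "lam * \<delta> = 0"
      by linarith+
    then have "p = 0" "lam = 0"
      using eps \<open>0 < \<delta>\<close> by simp_all
    have "finite_plan N \<Xi> (det_plan N (\<lambda>_. \<xi>0) (\<lambda>_. 1))"
      using \<xi>0 by (intro finite_plan_det_plan N) simp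
    from mult[OF this] have "plan_loss L (det_plan N (\<lambda>_. \<xi>0) (\<lambda>_. 1)) \<le> 0"
      using \<open>p = 0\<close> \<open>lam = 0\<close> by simp
    then show False
      using N \<xi>0(2) by (simp add: plan_loss_det_plan)
  qed
  from that[OF this lam mult] show ?thesis .
qed

lemma sum_SUP_le:
  fixes g :: "'i \<Rightarrow> 'a \<Rightarrow> real"
  assumes "finite I" "\<Xi> \<noteq> {}"
    and bound: "\<And>xs. (\<And>i. i \<in> I \<Longrightarrow> xs i \<in> \<Xi>) \<Longrightarrow> (\<Sum>i\<in>I. g i (xs i)) \<le> K"
  shows "\<And>i. i \<in> I \<Longrightarrow> bdd_above (g i ` \<Xi>)" and "(\<Sum>i\<in>I. SUP \<xi>\<in>\<Xi>. g i \<xi>) \<le> K"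
proof -
  obtain \<xi>0 where "\<xi>0 \<in> \<Xi>" using assms(2) by blast
  show bdd: "bdd_above (g i ` \<Xi>)" if "i \<in> I" for i
  proof (rule bdd_aboveI2)
    fix \<xi> assume "\<xi> \<in> \<Xi>"
    have "(\<Sum>j\<in>I. g j (((\<lambda>_. \<xi>0)(i := \<xi>)) j)) = g i \<xi> + (\<Sum>j\<in>I - {i}. g j \<xi>0)"
      using \<open>finite I\<close> that by (simp add: sum.remove)
    moreover have "(\<Sum>j\<in>I. g j (((\<lambda>_. \<xi>0)(i := \<xi>)) j)) \<le> K"
      using \<open>\<xi> \<in> \<Xi>\<close> \<open>\<xi>0 \<in> \<Xi>\<close> by (intro bound) auto
    ultimately show "g i \<xi> \<le> K - (\<Sum>j\<in>I - {i}. g j \<xi>0)"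
      by linarith
  qed
  show "(\<Sum>i\<in>I. SUP \<xi>\<in>\<Xi>. g i \<xi>) \<le> K"
  proof (rule field_le_epsilon)
    fix e :: real assume "0 < e"
    define \<eta> where "\<eta> = e / (card I + 1)"
    have "0 < \<eta>" "card I * \<eta> \<le> e"
      using \<open>0 < e\<close> by (auto simp: \<eta>_def field_simps)
    have "\<exists>\<xi>\<in>\<Xi>. (SUP \<xi>\<in>\<Xi>. g i \<xi>) - \<eta> < g i \<xi>" if "i \<in> I" for i
    proof -
      have "(SUP \<xi>\<in>\<Xi>. g i \<xi>) - \<eta> < (SUP \<xi>\<in>\<Xi>. g i \<xi>)"
        using \<open>0 < \<eta>\<close> by simp
      then show ?thesis
        using less_cSUP_iff[OF assms(2) bdd[OF that]] by blast
    qed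
    then obtain xs where xs: "\<And>i. i \<in> I \<Longrightarrow> xs i \<in> \<Xi> \<and> (SUP \<xi>\<in>\<Xi>. g i \<xi>) - \<eta> < g i (xs i)"
      by metis
    then have "(\<Sum>i\<in>I. SUP \<xi>\<in>\<Xi>. g i \<xi>) \<le> (\<Sum>i\<in>I. g i (xs i) + \<eta>)"
      by (intro sum_mono) (simp add: less_imp_le algebra_simps)
    also have "\<dots> = (\<Sum>i\<in>I. g i (xs i)) + card I * \<eta>"
      by (simp add: sum.distrib)
    also have "\<dots> \<le> K + e"
      using bound[of xs] xs \<open>card I * \<eta> \<le> e\<close> by (simp add: add_mono)
    finally show "(\<Sum>i\<in>I. SUP \<xi>\<in>\<Xi>. g i \<xi>) \<le> K + e" .
  qed
qed

text \<open>The deterministic plan that counts an atom in the tail exactly when its hinge is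
  active turns the multiplier inequality into a bound on the sum of the hinge functions.\<close>

lemma sum_hinge_le_of_plan_multipliers:
  assumes N: "1 \<le> N" and p: "0 < p"
    and mult: "\<And>q. finite_plan N \<Xi> q \<Longrightarrow>
      plan_loss L q \<le> p * (\<epsilon> - plan_mass q) + lam * (plan_cost nrm \<zeta> q - \<delta>)"
    and xs: "\<And>i. i \<in> {1..N} \<Longrightarrow> xs i \<in> \<Xi>"
  shows "(\<Sum>i=1..N. max (L (xs i) / p + 1) 0 - lam / p * nrm (xs i - \<zeta> i))
    \<le> N * (\<epsilon> - lam / p * \<delta>)"
proof -
  define us where "us i = (if 0 \<le> L (xs i) + p then 1 else 0 :: real)" for i
  have "finite_plan N \<Xi> (det_plan N xs us)"
    using xs by (intro finite_plan_det_plan N) (simp add: us_def)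
  from mult[OF this] N
  have "(\<Sum>i=1..N. us i * L (xs i)) / N
      \<le> p * (\<epsilon> - (\<Sum>i=1..N. us i) / N) + lam * ((\<Sum>i=1..N. nrm (xs i - \<zeta> i)) / N - \<delta>)"
    by (simp add: plan_mass_det_plan plan_loss_det_plan plan_cost_det_plan)
  then have "(\<Sum>i=1..N. us i * L (xs i))
      \<le> N * (p * (\<epsilon> - (\<Sum>i=1..N. us i) / N) + lam * ((\<Sum>i=1..N. nrm (xs i - \<zeta> i)) / N - \<delta>))"
    using N by (simp add: pos_divide_le_eq mult.commute)
  also have "\<dots> = N * (p * \<epsilon> - lam * \<delta>) - p * (\<Sum>i=1..N. us i)
      + lam * (\<Sum>i=1..N. nrm (xs i - \<zeta> i))"
    using N by (simp add: field_simps)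
  finally have bound: "(\<Sum>i=1..N. us i * L (xs i)) + p * (\<Sum>i=1..N. us i)
      - lam * (\<Sum>i=1..N. nrm (xs i - \<zeta> i)) \<le> N * (p * \<epsilon> - lam * \<delta>)"
    by linarith
  have "p * (max (L (xs i) / p + 1) 0 - lam / p * nrm (xs i - \<zeta> i))
      = us i * L (xs i) + p * us i - lam * nrm (xs i - \<zeta> i)" for i
    using p by (auto simp: us_def max_def field_simps)
  then have "p * (\<Sum>i=1..N. max (L (xs i) / p + 1) 0 - lam / p * nrm (xs i - \<zeta> i))
      = (\<Sum>i=1..N. us i * L (xs i) + p * us i - lam * nrm (xs i - \<zeta> i))"
    by (simp only: sum_distrib_left)
  also have "\<dots> = (\<Sum>i=1..N. us i * L (xs i)) + p * (\<Sum>i=1..N. us i)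
      - lam * (\<Sum>i=1..N. nrm (xs i - \<zeta> i))"
    by (simp add: sum.distrib sum_subtractf sum_distrib_left)
  also have "\<dots> \<le> N * (p * \<epsilon> - lam * \<delta>)"
    by (rule bound)
  also have "\<dots> = p * (N * (\<epsilon> - lam / p * \<delta>))"
    using p by (simp add: field_simps)
  finally show ?thesis
    using p by simp
qed

lemma mem_ZC2_of_linear_majorants:
  assumes nrm: "is_norm nrm" and lam: "0 \<le> lam" and \<alpha>: "\<And>t. t \<in> {1..T} \<Longrightarrow> 0 \<le> \<alpha> t"
    and s: "\<And>i. i \<in> {1..N} \<Longrightarrow> 0 \<le> s i"
    and budget: "lam * \<delta> + 1 / real N * (\<Sum>i=1..N. s i) \<le> \<epsilon>"
    and majorant: "\<And>i t. i \<in> {1..N} \<Longrightarrow> t \<in> {1..T} \<Longrightarrow> \<exists>w. dual_norm nrm w \<le> lam \<and>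
      (\<forall>\<xi>\<in>\<Xi>. - \<alpha> t * f t x \<xi> + (1 - s i) \<le> w \<bullet> (\<xi> - \<zeta> i))"
  shows "x \<in> ZC2 f T \<Xi> nrm N \<zeta> \<delta> \<epsilon>"
proof -
  obtain W where W: "\<And>i t. i \<in> {1..N} \<Longrightarrow> t \<in> {1..T} \<Longrightarrow> dual_norm nrm (W i t) \<le> lam \<and>
      (\<forall>\<xi>\<in>\<Xi>. - \<alpha> t * f t x \<xi> + (1 - s i) \<le> W i t \<bullet> (\<xi> - \<zeta> i))"
    using majorant by metis
  show ?thesis
    unfolding ZC2_def G_fun_add_le_0_iff
  proof (intro CollectI exI conjI ballI)
    show "0 \<le> lam" "\<And>t. t \<in> {1..T} \<Longrightarrow> 0 \<le> \<alpha> t" "\<And>i. i \<in> {1..N} \<Longrightarrow> 0 \<le> s i"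
      by (fact lam \<alpha> s)+
    show "lam * \<delta> + 1 / real N * (\<Sum>i=1..N. s i) \<le> \<epsilon>"
      by (fact budget)
    fix i t assume it: "i \<in> {1..N}" "t \<in> {1..T}"
    show "dual_norm nrm (- W i t) - lam \<le> 0"
      using W[OF it] by (simp add: dual_norm_uminus[OF nrm])
    fix \<xi> assume "\<xi> \<in> \<Xi>"
    then show "(- W i t) \<bullet> \<xi> - \<alpha> t * f t x \<xi> + (1 - (- W i t) \<bullet> \<zeta> i - s i) \<le> 0"
      using W[OF it] by (auto simp: inner_diff_right)
  qed
qed

lemma mem_ZC2_of_plan_multipliers:
  fixes f :: "nat \<Rightarrow> real ^ 'n \<Rightarrow> real ^ 'm \<Rightarrow> real"
  assumes nrm: "is_norm nrm" and N: "1 \<le> N" and "convex \<Xi>"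
    and samples: "\<And>i. i \<in> {1..N} \<Longrightarrow> \<zeta> i \<in> \<Xi>"
    and \<alpha>: "\<And>t. t \<in> {1..T} \<Longrightarrow> 0 < \<alpha> t"
    and conv: "\<And>t. t \<in> {1..T} \<Longrightarrow> convex_on UNIV (f t x)"
    and p: "0 < p" and lam: "0 \<le> lam"
    and mult: "\<And>q. finite_plan N \<Xi> q \<Longrightarrow>
      plan_loss (worst_loss f T \<alpha> x) q \<le> p * (\<epsilon> - plan_mass q) + lam * (plan_cost nrm \<zeta> q - \<delta>)"
  shows "x \<in> ZC2 f T \<Xi> nrm N \<zeta> \<delta> \<epsilon>"
proof -
  define g where "g i \<xi> = max (worst_loss f T \<alpha> x \<xi> / p + 1) 0 - lam / p * nrm (\<xi> - \<zeta> i)"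
    for i \<xi>
  define s where "s i = (SUP \<xi>\<in>\<Xi>. g i \<xi>)" for i
  have "\<Xi> \<noteq> {}"
    using samples N by fastforce
  have g_sum: "(\<Sum>i=1..N. g i (xs i)) \<le> N * (\<epsilon> - lam / p * \<delta>)"
    if "\<And>i. i \<in> {1..N} \<Longrightarrow> xs i \<in> \<Xi>" for xs
    unfolding g_def by (rule sum_hinge_le_of_plan_multipliers[OF N p mult that])
  from sum_SUP_le[where g = g, OF _ \<open>\<Xi> \<noteq> {}\<close> g_sum]
  have bdd: "\<And>i. i \<in> {1..N} \<Longrightarrow> bdd_above (g i ` \<Xi>)"
    and budget: "(\<Sum>i=1..N. s i) \<le> N * (\<epsilon> - lam / p * \<delta>)"
    unfolding s_def by auto
  have g_le_s: "g i \<xi> \<le> s i" if "i \<in> {1..N}" "\<xi> \<in> \<Xi>" for i \<xi>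
    unfolding s_def using bdd that by (intro cSUP_upper)
  show ?thesis
  proof (rule mem_ZC2_of_linear_majorants[where \<alpha> = "\<lambda>t. \<alpha> t / p" and lam = "lam / p"])
    show "0 \<le> lam / p" "\<And>t. t \<in> {1..T} \<Longrightarrow> 0 \<le> \<alpha> t / p"
      using lam p \<alpha> by (auto simp: less_imp_le)
    show "0 \<le> s i" if "i \<in> {1..N}" for i
      using g_le_s[OF that samples[OF that]] nrm by (simp add: g_def is_norm_zero)
    show "lam / p * \<delta> + 1 / real N * (\<Sum>i=1..N. s i) \<le> \<epsilon>"
      using budget N by (simp add: field_simps)
    fix i t assume it: "i \<in> {1..N}" "t \<in> {1..T}"
    have "concave_on \<Xi> (\<lambda>\<xi>. - (\<alpha> t / p) * f t x \<xi> + (1 - s i))"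
      using conv[OF it(2)] \<open>convex \<Xi>\<close> \<alpha>[OF it(2)] p by (intro concave_on_neg_scaled_convex) auto
    moreover have "- (\<alpha> t / p) * f t x \<xi> + (1 - s i) \<le> lam / p * nrm (\<xi> - \<zeta> i)"
      if "\<xi> \<in> \<Xi>" for \<xi>
    proof -
      have "- \<alpha> t * f t x \<xi> \<le> worst_loss f T \<alpha> x \<xi>"
        by (rule worst_loss_ge[OF it(2)])
      then have "- (\<alpha> t / p) * f t x \<xi> \<le> worst_loss f T \<alpha> x \<xi> / p"
        using divide_right_mono[of _ _ p] p by fastforce
      then show ?thesis
        using g_le_s[OF it(1) that] by (simp add: g_def)
    qed
    moreover have "0 \<le> lam / p"
      using lam p by simp
    ultimately obtain w where "dual_norm nrm w \<le> lam / p"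
      "\<And>\<xi>. \<xi> \<in> \<Xi> \<Longrightarrow> - (\<alpha> t / p) * f t x \<xi> + (1 - s i) \<le> w \<bullet> (\<xi> - \<zeta> i)"
      using concave_le_norm_imp_linear_majorant[OF nrm _ samples[OF it(1)]] by blast
    then show "\<exists>w. dual_norm nrm w \<le> lam / p \<and>
        (\<forall>\<xi>\<in>\<Xi>. - (\<alpha> t / p) * f t x \<xi> + (1 - s i) \<le> w \<bullet> (\<xi> - \<zeta> i))"
      by blast
  qed (rule nrm)
qed

lemma ZC_alpha_subset_ZC1_ZC2:
  fixes f :: "nat \<Rightarrow> real ^ 'n \<Rightarrow> real ^ 'm \<Rightarrow> real"
  assumes nrm: "is_norm nrm" and N: "1 \<le> N" and eps: "0 < \<epsilon>" "\<epsilon> < 1" and "0 < \<delta>"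
    and "closed \<Xi>" "convex \<Xi>" and samples: "\<And>i. i \<in> {1..N} \<Longrightarrow> \<zeta> i \<in> \<Xi>"
    and f: "\<And>t x. t \<in> {1..T} \<Longrightarrow> convex_on UNIV (f t x) \<and> continuous_on UNIV (f t x)"
    and \<alpha>: "\<And>t. t \<in> {1..T} \<Longrightarrow> 0 < \<alpha> t"
  shows "ZC_alpha f T \<epsilon> (ambiguity_set nrm \<Xi> N \<zeta> \<delta>) \<alpha> \<subseteq> ZC1 f T \<Xi> \<union> ZC2 f T \<Xi> nrm N \<zeta> \<delta> \<epsilon>"
proof
  fix x assume x: "x \<in> ZC_alpha f T \<epsilon> (ambiguity_set nrm \<Xi> N \<zeta> \<delta>) \<alpha>"
  show "x \<in> ZC1 f T \<Xi> \<union> ZC2 f T \<Xi> nrm N \<zeta> \<delta> \<epsilon>"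
  proof (cases "x \<in> ZC1 f T \<Xi>")
    case False
    then obtain \<xi>0 t where "\<xi>0 \<in> \<Xi>" and t: "t \<in> {1..T}" and "f t x \<xi>0 < 0"
      by (auto simp: ZC1_def not_le)
    then have "0 < - \<alpha> t * f t x \<xi>0"
      using \<alpha>[OF t] by (simp add: mult_pos_neg)
    then have peak: "0 < worst_loss f T \<alpha> x \<xi>0"
      using worst_loss_ge[OF t] by (rule less_le_trans)
    have meas: "worst_loss f T \<alpha> x \<in> borel_measurable borel"
      using f by (intro borel_measurable_worst_loss) auto
    have robust: "\<And>P. P \<in> ambiguity_set nrm \<Xi> N \<zeta> \<delta> \<Longrightarrow>
        (INF \<beta>. cvar_objective \<epsilon> (worst_loss f T \<alpha> x) P \<beta>) \<le> 0"
      using x by (simp add: mem_ZC_alpha_iff)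
    obtain p lam where "0 < p" "0 \<le> lam"
      "\<And>q. finite_plan N \<Xi> q \<Longrightarrow> plan_loss (worst_loss f T \<alpha> x) q
        \<le> p * (\<epsilon> - plan_mass q) + lam * (plan_cost nrm \<zeta> q - \<delta>)"
      using plan_lagrange_multipliers[where \<zeta> = \<zeta> and L = "worst_loss f T \<alpha> x",
          OF nrm N eps \<open>0 < \<delta>\<close> \<open>closed \<Xi>\<close> samples meas robust \<open>\<xi>0 \<in> \<Xi>\<close> peak]
      by blast
    then have "x \<in> ZC2 f T \<Xi> nrm N \<zeta> \<delta> \<epsilon>"
      using f by (intro mem_ZC2_of_plan_multipliers[OF nrm N \<open>convex \<Xi>\<close> samples \<alpha>]) auto
    then show ?thesis by simp
  qed simp
qed

theorem proposition1:
  fixes f :: "nat \<Rightarrow> real ^ 'n \<Rightarrow> real ^ 'm \<Rightarrow> real"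
    and T N :: nat and \<epsilon> \<delta> :: real
    and \<Xi> :: "(real ^ 'm) set" and \<zeta> :: "nat \<Rightarrow> real ^ 'm"
    and nrm :: "real ^ 'm \<Rightarrow> real"
  assumes T: "T \<ge> 1" and N: "N \<ge> 1"
    and eps: "0 < \<epsilon>" "\<epsilon> < 1" and delta: "\<delta> > 0"
    and nrm: "is_norm nrm"
    and A1_convex: "\<And>t x. t \<in> {1..T} \<Longrightarrow> convex_on UNIV (\<lambda>\<xi>. f t x \<xi>) \<and> continuous_on UNIV (\<lambda>\<xi>. f t x \<xi>)"
    and A1_concave: "\<And>t \<xi>. t \<in> {1..T} \<Longrightarrow> concave_on UNIV (\<lambda>x. f t x \<xi>) \<and> continuous_on UNIV (\<lambda>x. f t x \<xi>)"
    and A2: "\<Xi> \<noteq> {}" "closed \<Xi>" "convex \<Xi>"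
    and samples: "\<And>i. i \<in> {1..N} \<Longrightarrow> \<zeta> i \<in> \<Xi>"
  shows "ZC f T \<epsilon> (ambiguity_set nrm \<Xi> N \<zeta> \<delta>) = ZC1 f T \<Xi> \<union> ZC2 f T \<Xi> nrm N \<zeta> \<delta> \<epsilon>"
proof -
  let ?PW = "ambiguity_set nrm \<Xi> N \<zeta> \<delta>"
  have f: "\<And>t x. t \<in> {1..T} \<Longrightarrow> convex_on UNIV (f t x) \<and> continuous_on UNIV (f t x)"
    using A1_convex by simp
  have "ZC_alpha f T \<epsilon> ?PW \<alpha> \<subseteq> ZC1 f T \<Xi> \<union> ZC2 f T \<Xi> nrm N \<zeta> \<delta> \<epsilon>"
    if "\<alpha> \<in> {\<alpha>. \<forall>t\<in>{1..T}. 0 < \<alpha> t}" for \<alpha>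
    using that by (intro ZC_alpha_subset_ZC1_ZC2[where f = f and \<zeta> = \<zeta>,
          OF nrm N eps delta A2(2,3) samples f]) auto
  then have "ZC f T \<epsilon> ?PW \<subseteq> ZC1 f T \<Xi> \<union> ZC2 f T \<Xi> nrm N \<zeta> \<delta> \<epsilon>"
    unfolding ZC_def by (rule UN_least)
  moreover have "ZC_alpha f T \<epsilon> ?PW (\<lambda>_. 1) \<subseteq> ZC f T \<epsilon> ?PW"
    unfolding ZC_def by (rule UN_upper) simp
  with ZC1_subset_ZC_alpha[OF T eps(1)] have "ZC1 f T \<Xi> \<subseteq> ZC f T \<epsilon> ?PW"
    by (rule order_trans)
  moreover have "ZC2 f T \<Xi> nrm N \<zeta> \<delta> \<epsilon> \<subseteq> ZC f T \<epsilon> ?PW"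
    using delta f
    by (intro ZC2_subset_ZC[where f = f and \<zeta> = \<zeta>, OF nrm N T eps _ A2(2) samples]) auto
  ultimately show ?thesis
    by blast
qed

end
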